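(* Let $\mathcal X$ be finite and let $\hat P_0,\hat P_1$ be distributions on $\mathcal X$ with full support. For a threshold $\hat\gamma$ with $-D(\hat P_0\|\hat P_1)\le\hat\gamma\le D(\hat P_1\|\hat P_0)$ let $\hat{\mathcal Q}_0=\{Q:D(Q\|\hat P_0)-D(Q\|\hat P_1)\ge\hat\gamma\}$, $\hat{\mathcal Q}_1=\{Q:D(Q\|\hat P_0)-D(Q\|\hat P_1)\le\hat\gamma\}$, and for $r_0,r_1\ge0$ define the worst-case error exponents of the mismatched likelihood ratio test $$\underline{\hat E}_0(r_0)=\min_{P_0\in\mathcal B(\hat P_0,r_0)}\min_{Q\in\hat{\mathcal Q}_0}D(Q\|P_0),\qquad \underline{\hat E}_1(r_1)=\min_{P_1\in\mathcal B(\hat P_1,r_1)}\min_{Q\in\hat{\mathcal Q}_1}D(Q\|P_1).$$ Let $\hat Q_\lambda(x)=\hat P_0^{1-\lambda}(x)\hat P_1^{\lambda}(x)/\sum_a\hat P_0^{1-\lambda}(a)\hat P_1^{\lambda}(a)$ with $\lambda\in[0,1]$ solving $D(\hat Q_\lambda\|\hat P_0)-D(\hat Q_\lambda\|\hat P_1)=\hat\gamma$, and let $E_0=D(\hat Q_\lambda\|\hat P_0)$, $E_1=D(\hat Q_\lambda\|\hat P_1)$ (the matched exponents). Then for $i\in\{0,1\}$, as $r_i\to0$, $$\underline{\hat E}_i(r_i)=E_i-\sqrt{r_i\,\theta_i(\hat P_0,\hat P_1,\hat\gamma)}+o(\sqrt{r_i}),\qquad \theta_i(\hat P_0,\hat P_1,\hat\gamma)=\frac{2}{\alpha}\mathrm{Var}_{\hat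 P_i}\Big(\frac{\hat Q_\lambda(X)}{\hat P_i(X)}\Big).$$
   Context: $D$ is relative entropy. The divergence ball is $\mathcal B(Q,r)=\{P\in\mathcal P(\mathcal X):d(Q,P)\le r\}$ where either (i) $d(Q,P)=D_\alpha(Q\|P)=\frac{1}{\alpha-1}\log\sum_x Q(x)^\alpha P(x)^{1-\alpha}$ is the Rényi divergence of order $\alpha>0$ ($\alpha=1$ meaning relative entropy), or (ii) $d(Q,P)=D_f(Q\|P)=\sum_xP(x)f(Q(x)/P(x))$ is an $f$-divergence with $f$ convex and twice differentiable, in which case $\alpha:=f''(1)$. The mismatched likelihood ratio test with test distributions $\hat P_0,\hat P_1$ decides hypothesis 1 iff $D(\hat T\|\hat P_0)-D(\hat T\|\hat P_1)\ge\hat\gamma$ for observation type $\hat T$, while observations are generated i.i.d. by the true $P_0$ or $P_1$; the inner minima above are its error exponents under true distribution $P_i$. *)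

theory Defs
  imports "HOL-Analysis.Analysis"
begin

definition pdists :: "('a::finite \<Rightarrow> real) set" where
  "pdists = {P. (\<forall>x. 0 \<le> P x) \<and> (\<Sum>x\<in>UNIV. P x) = 1}"

definition KL :: "('a::finite \<Rightarrow> real) \<Rightarrow> ('a \<Rightarrow> real) \<Rightarrow> ereal" where
  "KL Q P = (if \<exists>x. 0 < Q x \<and> P x = 0 then \<infinity>
             else ereal (\<Sum>x\<in>UNIV. if Q x = 0 then 0 else Q x * ln (Q x / P x)))"

definition renyi_div :: "real \<Rightarrow> ('a::finite \<Rightarrow> real) \<Rightarrow> ('a \<Rightarrow> real) \<Rightarrow> ereal" where
  "renyi_div \<alpha> Q P =
     (if \<alpha> = 1 then KL Q P
      else if 1 < \<alpha> \<and> (\<exists>x. 0 < Q x \<and> P x = 0) then \<infinity>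
      else (let s = (\<Sum>x\<in>UNIV. Q x powr \<alpha> * P x powr (1 - \<alpha>))
            in if s = 0 then \<infinity> else ereal (ln s / (\<alpha> - 1))))"

definition f_div :: "(real \<Rightarrow> real) \<Rightarrow> ('a::finite \<Rightarrow> real) \<Rightarrow> ('a \<Rightarrow> real) \<Rightarrow> ereal" where
  "f_div f Q P =
     (\<Sum>x\<in>UNIV. if P x = 0 then (if Q x = 0 then 0
                                 else ereal (Q x) * Lim at_top (\<lambda>t. ereal (f t / t)))
                else ereal (P x * f (Q x / P x)))"

definition div_ball ::
  "(('a::finite \<Rightarrow> real) \<Rightarrow> ('a \<Rightarrow> real) \<Rightarrow> ereal) \<Rightarrow> ('a \<Rightarrow> real) \<Rightarrow> real \<Rightarrow> ('a \<Rightarrow> real) set" where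
  "div_ball d Q r = {P \<in> pdists. d Q P \<le> ereal r}"

definition Qhat0 :: "('a::finite \<Rightarrow> real) \<Rightarrow> ('a \<Rightarrow> real) \<Rightarrow> real \<Rightarrow> ('a \<Rightarrow> real) set" where
  "Qhat0 P0h P1h \<gamma> = {Q \<in> pdists. ereal \<gamma> \<le> KL Q P0h - KL Q P1h}"

definition Qhat1 :: "('a::finite \<Rightarrow> real) \<Rightarrow> ('a \<Rightarrow> real) \<Rightarrow> real \<Rightarrow> ('a \<Rightarrow> real) set" where
  "Qhat1 P0h P1h \<gamma> = {Q \<in> pdists. KL Q P0h - KL Q P1h \<le> ereal \<gamma>}"

text \<open>Worst-case error exponents (the min over the ball and the min over
  the acceptance region, written as infima).\<close>
definition worst_exp0 ::
  "(('a::finite \<Rightarrow> real) \<Rightarrow> ('a \<Rightarrow> real) \<Rightarrow> ereal) \<Rightarrow> ('a \<Rightarrow> real) \<Rightarrow> ('a \<Rightarrow> real) \<Rightarrow> real \<Rightarrow> real \<Rightarrow> ereal" where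
  "worst_exp0 d P0h P1h \<gamma> r =
     (INF P0 \<in> div_ball d P0h r. INF Q \<in> Qhat0 P0h P1h \<gamma>. KL Q P0)"

definition worst_exp1 ::
  "(('a::finite \<Rightarrow> real) \<Rightarrow> ('a \<Rightarrow> real) \<Rightarrow> ereal) \<Rightarrow> ('a \<Rightarrow> real) \<Rightarrow> ('a \<Rightarrow> real) \<Rightarrow> real \<Rightarrow> real \<Rightarrow> ereal" where
  "worst_exp1 d P0h P1h \<gamma> r =
     (INF P1 \<in> div_ball d P1h r. INF Q \<in> Qhat1 P0h P1h \<gamma>. KL Q P1)"

definition tilt :: "('a::finite \<Rightarrow> real) \<Rightarrow> ('a \<Rightarrow> real) \<Rightarrow> real \<Rightarrow> 'a \<Rightarrow> real" where
  "tilt P0 P1 l x = P0 x powr (1 - l) * P1 x powr l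
                     / (\<Sum>a\<in>UNIV. P0 a powr (1 - l) * P1 a powr l)"

definition variance_under :: "('a::finite \<Rightarrow> real) \<Rightarrow> ('a \<Rightarrow> real) \<Rightarrow> real" where
  "variance_under P g = (\<Sum>x\<in>UNIV. P x * (g x - (\<Sum>y\<in>UNIV. P y * g y))\<^sup>2)"

definition admissible_div ::
  "(('a::finite \<Rightarrow> real) \<Rightarrow> ('a \<Rightarrow> real) \<Rightarrow> ereal) \<Rightarrow> real \<Rightarrow> bool" where
  "admissible_div d \<alpha> \<longleftrightarrow>
     (0 < \<alpha> \<and> d = renyi_div \<alpha>) \<or>
     (\<exists>f f' f''. convex_on {0..} f \<and> f 1 = 0 \<and>
        (\<forall>t>0. (f has_real_derivative f' t) (at t) \<and> (f' has_real_derivative f'' t) (at t)) \<and>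
        \<alpha> = f'' 1 \<and> 0 < \<alpha> \<and> d = f_div f)"

end

theory Submission
  imports Defs
begin

(* Near a distribution A of full support every admissible divergence behaves like
   d(A,P) = (\<alpha>/2) \<chi>\<^sup>2(P||A) + o(\<chi>\<^sup>2(P||A)): f-divergences, relative entropy and (after a monotone
   transform) Renyi divergences are sums \<Sum>\<^sub>x A x p(P x / A x) whose generator p has
   p(1) = p'(1) = 0 and p''(1) = \<alpha>.
   Let Q be the tilted distribution and E = D(Q||A); Q minimises Q' \<mapsto> \<Sum>\<^sub>x Q' x ln(Q x / A x) over
   the acceptance region.  For P in the ball of radius r, the variational bound
   D(Q'||P) \<ge> \<Sum> Q' g - \<Sum> P e\<^sup>g + 1 with g = ln(Q/A), followed by Cauchy-Schwarz, gives
   D(Q'||P) \<ge> E - sqrt(\<chi>\<^sup>2(Q||A) \<chi>\<^sup>2(P||A)) \<ge> E - sqrt(r \<theta>) - o(sqrt r), where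
   \<theta> = (2/\<alpha>) \<chi>\<^sup>2(Q||A) = (2/\<alpha>) Var\<^sub>A(Q/A).  Conversely P = A (1 + t (Q/A - 1)) with (\<alpha>/2) t\<^sup>2 \<chi>\<^sup>2(Q||A) \<approx> r
   lies in the ball, and D(Q||P) = E - t \<chi>\<^sup>2(Q||A) + O(t\<^sup>2) = E - sqrt(r \<theta>) + o(sqrt r). *)

section \<open>Functions with a nondegenerate minimum at one\<close>

lemma valley_monotone:
  fixes g g' :: "real \<Rightarrow> real"
  assumes deriv: "\<And>t. a < t \<Longrightarrow> t < b \<Longrightarrow> (g has_real_derivative g' t) (at t)"
    and below: "\<And>t. a < t \<Longrightarrow> t < m \<Longrightarrow> g' t \<le> 0"
    and above: "\<And>t. m < t \<Longrightarrow> t < b \<Longrightarrow> 0 \<le> g' t"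
    and m: "a < m" "m < b"
  shows "a < t \<Longrightarrow> t \<le> u \<Longrightarrow> u \<le> m \<Longrightarrow> g u \<le> g t"
    and "m \<le> u \<Longrightarrow> u \<le> t \<Longrightarrow> t < b \<Longrightarrow> g u \<le> g t"
proof -
  have cont: "continuous_on {x..y} g" if "a < x" "y < b" for x y
    using that by (intro continuous_at_imp_continuous_on ballI DERIV_isCont[OF deriv]) auto
  show "g u \<le> g t" if "a < t" "t \<le> u" "u \<le> m"
  proof (rule DERIV_nonpos_imp_decreasing_open[OF \<open>t \<le> u\<close>])
    fix x assume "t < x" "x < u"
    then show "\<exists>y. DERIV g x :> y \<and> y \<le> 0"
      using that deriv below m by (intro exI[of _ "g' x"]) auto
  qed (use cont that m in auto)
  show "g u \<le> g t" if "m \<le> u" "u \<le> t" "t < b"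
  proof (rule DERIV_nonneg_imp_increasing_open[OF \<open>u \<le> t\<close>])
    fix x assume "u < x" "x < t"
    then show "\<exists>y. DERIV g x :> y \<and> 0 \<le> y"
      using that deriv above m by (intro exI[of _ "g' x"]) auto
  qed (use cont that m in auto)
qed

lemma valley_min:
  fixes g g' :: "real \<Rightarrow> real"
  assumes "\<And>t. a < t \<Longrightarrow> t < b \<Longrightarrow> (g has_real_derivative g' t) (at t)"
    and "\<And>t. a < t \<Longrightarrow> t < m \<Longrightarrow> g' t \<le> 0"
    and "\<And>t. m < t \<Longrightarrow> t < b \<Longrightarrow> 0 \<le> g' t"
    and "a < m" "m < b" "a < t" "t < b"
  shows "g m \<le> g t"
proof (cases "t \<le> m")
  case True
  show ?thesis by (rule valley_monotone(1)[OF assms(1-5) \<open>a < t\<close> True order_refl])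
next
  case False
  then have "m \<le> t" by linarith
  then show ?thesis using valley_monotone(2)[OF assms(1-5) order_refl] \<open>t < b\<close> by blast
qed

locale flat_at_one =
  fixes p p' :: "real \<Rightarrow> real" and a :: real
  assumes p_deriv: "\<And>t. 0 < t \<Longrightarrow> (p has_real_derivative p' t) (at t)"
    and p_one: "p 1 = 0"
    and p'_one: "p' 1 = 0"
    and p'_deriv_one: "(p' has_real_derivative a) (at 1)"
begin

lemma nonneg_near_one:
  assumes "0 < a"
  shows "\<exists>\<rho>>0. \<rho> < 1 \<and> (\<forall>t. \<bar>t - 1\<bar> \<le> \<rho> \<longrightarrow> 0 \<le> p t)"
proof -
  have "((\<lambda>s. p' s / (s - 1)) \<longlongrightarrow> a) (at 1)"
    using p'_deriv_one p'_one by (simp add: has_field_derivative_iff)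
  then have "\<forall>\<^sub>F s in at 1. 0 < p' s / (s - 1)"
    using assms by (rule order_tendstoD)
  then obtain \<delta> where \<delta>: "0 < \<delta>" "\<And>s. s \<noteq> 1 \<Longrightarrow> dist s 1 < \<delta> \<Longrightarrow> 0 < p' s / (s - 1)"
    by (auto simp: eventually_at)
  define \<rho> where "\<rho> = min (\<delta> / 2) (1 / 2)"
  have \<rho>: "0 < \<rho>" "\<rho> < 1" "2 * \<rho> \<le> \<delta>" "2 * \<rho> \<le> 1"
    using \<delta> by (auto simp: \<rho>_def)
  have "p 1 \<le> p t" if "\<bar>t - 1\<bar> \<le> \<rho>" for t
  proof (rule valley_min[of "1 - 2 * \<rho>" "1 + 2 * \<rho>" p p'])
    show "(p has_real_derivative p' s) (at s)" if "1 - 2 * \<rho> < s" for s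
      using that \<rho> by (intro p_deriv) auto
    show "p' s \<le> 0" if "1 - 2 * \<rho> < s" "s < 1" for s
      using that \<rho> \<delta>(2)[of s] by (auto simp: dist_real_def zero_less_divide_iff)
    show "0 \<le> p' s" if "1 < s" "s < 1 + 2 * \<rho>" for s
      using that \<rho> \<delta>(2)[of s] by (auto simp: dist_real_def zero_less_divide_iff)
  qed (use that \<rho> in auto)
  then show ?thesis using \<rho> p_one by auto
qed

lemma quadratic_lower_near_one:
  assumes "c < a / 2"
  shows "\<exists>\<rho>>0. \<rho> < 1 \<and> (\<forall>t. \<bar>t - 1\<bar> \<le> \<rho> \<longrightarrow> c * (t - 1)\<^sup>2 \<le> p t)"
proof -
  interpret shifted: flat_at_one "\<lambda>t. p t - c * (t - 1)\<^sup>2" "\<lambda>t. p' t - 2 * c * (t - 1)" "a - 2 * c"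
    by unfold_locales
      (auto intro!: derivative_eq_intros p_deriv p'_deriv_one simp: p_one p'_one)
  show ?thesis using shifted.nonneg_near_one assms by auto
qed

lemma quadratic_upper_near_one:
  assumes "a / 2 < c"
  shows "\<exists>\<rho>>0. \<rho> < 1 \<and> (\<forall>t. \<bar>t - 1\<bar> \<le> \<rho> \<longrightarrow> p t \<le> c * (t - 1)\<^sup>2)"
proof -
  interpret shifted: flat_at_one "\<lambda>t. c * (t - 1)\<^sup>2 - p t" "\<lambda>t. 2 * c * (t - 1) - p' t" "2 * c - a"
    by unfold_locales
      (auto intro!: derivative_eq_intros p_deriv p'_deriv_one simp: p_one p'_one)
  show ?thesis using shifted.nonneg_near_one assms by auto
qed

end

locale divergence_generator = flat_at_one +
  assumes p'_nonpos_below_one: "\<And>t. 0 < t \<Longrightarrow> t < 1 \<Longrightarrow> p' t \<le> 0"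
    and p'_nonneg_above_one: "\<And>t. 1 < t \<Longrightarrow> 0 \<le> p' t"
begin

lemma antimono_below_one:
  assumes "0 < t" "t \<le> u" "u \<le> 1"
  shows "p u \<le> p t"
  by (rule valley_monotone(1)[of 0 2 p p' 1])
    (use assms p_deriv p'_nonpos_below_one p'_nonneg_above_one in auto)

lemma mono_above_one:
  assumes "1 \<le> u" "u \<le> t"
  shows "p u \<le> p t"
  by (rule valley_monotone(2)[of 0 "t + 1" p p' 1])
    (use assms p_deriv p'_nonpos_below_one p'_nonneg_above_one in auto)

lemma nonneg: "0 < t \<Longrightarrow> 0 \<le> p t"
  using antimono_below_one[of t 1] mono_above_one[of 1 t] p_one by (cases "t \<le> 1") auto

lemma quadratic_lower_bound:
  assumes "c < a / 2"
  shows "\<exists>\<rho>>0. \<rho> < 1 \<and> (\<forall>t. \<bar>t - 1\<bar> \<le> \<rho> \<longrightarrow> c * (t - 1)\<^sup>2 \<le> p t)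
           \<and> (\<forall>t>0. \<rho> \<le> \<bar>t - 1\<bar> \<longrightarrow> c * \<rho>\<^sup>2 \<le> p t)"
proof -
  obtain \<rho> where \<rho>: "0 < \<rho>" "\<rho> < 1" and near: "\<forall>t. \<bar>t - 1\<bar> \<le> \<rho> \<longrightarrow> c * (t - 1)\<^sup>2 \<le> p t"
    using quadratic_lower_near_one[OF assms] by blast
  have "c * \<rho>\<^sup>2 \<le> p t" if "0 < t" "\<rho> \<le> \<bar>t - 1\<bar>" for t
  proof (cases "t < 1")
    case True
    then have "p (1 - \<rho>) \<le> p t" using that \<rho> by (intro antimono_below_one) auto
    moreover have "c * \<rho>\<^sup>2 \<le> p (1 - \<rho>)" using near[rule_format, of "1 - \<rho>"] \<rho> by simp
    ultimately show ?thesis by simp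
  next
    case False
    then have "p (1 + \<rho>) \<le> p t" using that \<rho> by (intro mono_above_one) auto
    moreover have "c * \<rho>\<^sup>2 \<le> p (1 + \<rho>)" using near[rule_format, of "1 + \<rho>"] \<rho> by simp
    ultimately show ?thesis by simp
  qed
  then show ?thesis using \<rho> near by blast
qed

end

section \<open>Chi-square divergence and divergences with a generator\<close>

lemma pdists_sum: "P \<in> pdists \<Longrightarrow> (\<Sum>x\<in>UNIV. P x) = 1"
  and pdists_nonneg: "P \<in> pdists \<Longrightarrow> 0 \<le> P x"
  by (auto simp: pdists_def)

definition chi_square :: "('a::finite \<Rightarrow> real) \<Rightarrow> ('a \<Rightarrow> real) \<Rightarrow> real" where
  "chi_square A P = (\<Sum>x\<in>UNIV. A x * (P x / A x - 1)\<^sup>2)"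

definition gen_div :: "(real \<Rightarrow> real) \<Rightarrow> ('a::finite \<Rightarrow> real) \<Rightarrow> ('a \<Rightarrow> real) \<Rightarrow> real" where
  "gen_div p A P = (\<Sum>x\<in>UNIV. A x * p (P x / A x))"

lemma chi_square_nonneg: "(\<And>x. 0 \<le> A x) \<Longrightarrow> 0 \<le> chi_square A P"
  unfolding chi_square_def by (intro sum_nonneg mult_nonneg_nonneg) auto

lemma chi_square_le:
  assumes A: "A \<in> pdists" and near: "\<forall>x. \<bar>P x / A x - 1\<bar> \<le> \<rho>"
  shows "chi_square A P \<le> \<rho>\<^sup>2"
proof -
  have "chi_square A P \<le> (\<Sum>x\<in>UNIV. A x * \<rho>\<^sup>2)"
    unfolding chi_square_def
  proof (intro sum_mono mult_left_mono)
    fix x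
    show "(P x / A x - 1)\<^sup>2 \<le> \<rho>\<^sup>2"
      using power_mono[OF near[rule_format, of x], of 2] by simp
  qed (use pdists_nonneg[OF A] in auto)
  also have "\<dots> = \<rho>\<^sup>2"
    by (simp add: sum_distrib_right[symmetric] pdists_sum[OF A])
  finally show ?thesis .
qed

lemma variance_ratio_eq_chi_square:
  assumes A: "A \<in> pdists" "\<forall>x. 0 < A x" and Q: "Q \<in> pdists"
  shows "variance_under A (\<lambda>x. Q x / A x) = chi_square A Q"
proof -
  have "A y * (Q y / A y) = Q y" for y
    using A(2)[rule_format, of y] by simp
  then have "(\<Sum>y\<in>UNIV. A y * (Q y / A y)) = 1"
    using pdists_sum[OF Q] by simp
  then show ?thesis unfolding variance_under_def chi_square_def by simp
qed

lemma sum_ratio_le_sqrt_chi_square: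
  assumes A: "A \<in> pdists" "\<forall>x. 0 < A x" and Q: "Q \<in> pdists" and P: "P \<in> pdists"
  shows "(\<Sum>x\<in>UNIV. Q x * P x / A x) - 1 \<le> sqrt (chi_square A Q * chi_square A P)"
proof -
  define u where "u x = sqrt (A x) * (Q x / A x - 1)" for x
  define v where "v x = sqrt (A x) * (P x / A x - 1)" for x
  have "u x * v x = Q x * P x / A x - Q x - P x + A x" for x
    using A(2)[rule_format, of x] by (simp add: u_def v_def field_simps)
  then have "(\<Sum>x\<in>UNIV. u x * v x) = (\<Sum>x\<in>UNIV. Q x * P x / A x) - 1"
    by (simp add: sum.distrib sum_subtractf pdists_sum[OF A(1)] pdists_sum[OF Q] pdists_sum[OF P])
  moreover have "(\<Sum>x\<in>UNIV. (u x)\<^sup>2) = chi_square A Q" "(\<Sum>x\<in>UNIV. (v x)\<^sup>2) = chi_square A P"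
    using A(2) by (simp_all add: u_def v_def chi_square_def power_mult_distrib less_imp_le)
  ultimately show ?thesis
    using Cauchy_Schwarz_ineq_sum[of u v UNIV] by (simp add: real_le_rsqrt)
qed

lemma sum_ratio_deviation:
  assumes A: "A \<in> pdists" "\<forall>x. 0 < A x" and Q: "Q \<in> pdists"
  shows "(\<Sum>x\<in>UNIV. A x * (Q x / A x - 1)) = 0"
    and "(\<Sum>x\<in>UNIV. Q x * (Q x / A x - 1)) = chi_square A Q"
proof -
  have "A x * (Q x / A x - 1) = Q x - A x" for x
    using A(2)[rule_format, of x] by (simp add: field_simps)
  then show zero: "(\<Sum>x\<in>UNIV. A x * (Q x / A x - 1)) = 0"
    by (simp add: sum_subtractf pdists_sum[OF A(1)] pdists_sum[OF Q])
  have "Q x * (Q x / A x - 1) = A x * (Q x / A x - 1)\<^sup>2 + A x * (Q x / A x - 1)" for x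
    using A(2)[rule_format, of x] by (simp add: field_simps power2_eq_square)
  then show "(\<Sum>x\<in>UNIV. Q x * (Q x / A x - 1)) = chi_square A Q"
    by (simp add: sum.distrib zero chi_square_def)
qed

context flat_at_one
begin

lemma gen_div_le_chi_square:
  assumes A: "\<forall>x. 0 < A x" and c: "a / 2 < c"
  shows "\<exists>\<rho>>0. \<rho> < 1 \<and> (\<forall>P. (\<forall>x. \<bar>P x / A x - 1\<bar> \<le> \<rho>) \<longrightarrow> gen_div p A P \<le> c * chi_square A P)"
proof -
  obtain \<rho> where \<rho>: "0 < \<rho>" "\<rho> < 1" and near: "\<forall>t. \<bar>t - 1\<bar> \<le> \<rho> \<longrightarrow> p t \<le> c * (t - 1)\<^sup>2"
    using quadratic_upper_near_one[OF c] by blast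
  have "gen_div p A P \<le> c * chi_square A P" if "\<forall>x. \<bar>P x / A x - 1\<bar> \<le> \<rho>" for P
  proof -
    have "gen_div p A P \<le> (\<Sum>x\<in>UNIV. A x * (c * (P x / A x - 1)\<^sup>2))"
      unfolding gen_div_def using that near A by (intro sum_mono mult_left_mono) (auto simp: less_imp_le)
    then show ?thesis by (simp add: chi_square_def sum_distrib_left algebra_simps)
  qed
  then show ?thesis using \<rho> by blast
qed

end

context divergence_generator
begin

lemma chi_square_le_gen_div:
  assumes A: "\<forall>x. 0 < A x" and c: "0 < c" "c < a / 2"
  shows "\<exists>\<kappa>>0. \<forall>P. (\<forall>x. 0 < P x) \<longrightarrow> gen_div p A P \<le> \<kappa> \<longrightarrow> c * chi_square A P \<le> gen_div p A P"
proof -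
  obtain \<rho> where \<rho>: "0 < \<rho>" and near: "\<forall>t. \<bar>t - 1\<bar> \<le> \<rho> \<longrightarrow> c * (t - 1)\<^sup>2 \<le> p t"
    and far: "\<forall>t>0. \<rho> \<le> \<bar>t - 1\<bar> \<longrightarrow> c * \<rho>\<^sup>2 \<le> p t"
    using quadratic_lower_bound[OF c(2)] by blast
  define \<kappa> where "\<kappa> = (MIN x. A x) * (c * \<rho>\<^sup>2) / 2"
  have min_A: "0 < (MIN x. A x)" "\<And>x. (MIN x. A x) \<le> A x"
    using A by (simp_all add: Min_gr_iff)
  then have \<kappa>: "0 < \<kappa>" "\<kappa> < (MIN x. A x) * (c * \<rho>\<^sup>2)"
    using c \<rho> by (simp_all add: \<kappa>_def)
  have "c * chi_square A P \<le> gen_div p A P" if P: "\<forall>x. 0 < P x" and small: "gen_div p A P \<le> \<kappa>" for P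
  proof -
    have terms_nonneg: "0 \<le> A x * p (P x / A x)" for x
      using A P by (simp add: nonneg less_imp_le)
    have "\<bar>P x / A x - 1\<bar> < \<rho>" for x
      \<comment> \<open>otherwise the single term A x p(P x / A x) would already exceed \<kappa>\<close>
    proof (rule ccontr)
      assume "\<not> \<bar>P x / A x - 1\<bar> < \<rho>"
      then have "c * \<rho>\<^sup>2 \<le> p (P x / A x)" using far A P by simp
      then have "(MIN x. A x) * (c * \<rho>\<^sup>2) \<le> A x * p (P x / A x)"
        using min_A c A by (intro mult_mono) (auto simp: less_imp_le)
      also have "\<dots> \<le> gen_div p A P"
        unfolding gen_div_def by (rule member_le_sum) (use terms_nonneg in auto)
      finally show False using small \<kappa> by linarith
    qed
    then have "(\<Sum>x\<in>UNIV. A x * (c * (P x / A x - 1)\<^sup>2)) \<le> gen_div p A P"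
      unfolding gen_div_def using near A by (intro sum_mono mult_left_mono) (auto simp: less_imp_le)
    then show ?thesis by (simp add: chi_square_def sum_distrib_left algebra_simps)
  qed
  then show ?thesis using \<kappa> by blast
qed

lemma gen_div_nonneg:
  "\<forall>x. 0 < A x \<Longrightarrow> \<forall>x. 0 < P x \<Longrightarrow> 0 \<le> gen_div p A P"
  unfolding gen_div_def by (intro sum_nonneg mult_nonneg_nonneg) (auto simp: nonneg less_imp_le)

end

section \<open>Admissible divergences are locally quadratic\<close>

(* Together the two properties say d(A,P) = (\<alpha>/2) \<chi>\<^sup>2(P||A) + o(\<chi>\<^sup>2(P||A)) for P near A; this local
   behaviour is all that the expansion of the worst-case exponents uses about d. *)

definition locally_ge_chi_square ::
  "(('a::finite \<Rightarrow> real) \<Rightarrow> ('a \<Rightarrow> real) \<Rightarrow> ereal) \<Rightarrow> ('a \<Rightarrow> real) \<Rightarrow> real \<Rightarrow> bool" where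
  "locally_ge_chi_square d A \<alpha> \<longleftrightarrow> (\<forall>c. 0 < c \<and> c < \<alpha> / 2 \<longrightarrow>
     (\<exists>\<kappa>>0. \<forall>P\<in>pdists. d A P \<le> ereal \<kappa> \<longrightarrow> ereal (c * chi_square A P) \<le> d A P))"

definition locally_le_chi_square ::
  "(('a::finite \<Rightarrow> real) \<Rightarrow> ('a \<Rightarrow> real) \<Rightarrow> ereal) \<Rightarrow> ('a \<Rightarrow> real) \<Rightarrow> real \<Rightarrow> bool" where
  "locally_le_chi_square d A \<alpha> \<longleftrightarrow> (\<forall>c. \<alpha> / 2 < c \<longrightarrow>
     (\<exists>\<rho>>0. \<forall>P\<in>pdists. (\<forall>x. \<bar>P x / A x - 1\<bar> \<le> \<rho>) \<longrightarrow> d A P \<le> ereal (c * chi_square A P)))"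

lemma pos_if_ratio_near_one:
  fixes A P :: "'a \<Rightarrow> real"
  assumes "0 < A x" "\<bar>P x / A x - 1\<bar> \<le> \<rho>" "\<rho> < 1"
  shows "0 < P x"
proof -
  have "0 < P x / A x" using abs_le_D2[OF assms(2)] assms(3) by linarith
  then show ?thesis using assms(1) by (simp add: zero_less_divide_iff)
qed

lemma (in flat_at_one) locally_le_chi_square_if_gen_div:
  assumes A: "\<forall>x. 0 < A x"
    and d: "\<And>P. P \<in> pdists \<Longrightarrow> \<forall>x. 0 < P x \<Longrightarrow> d A P = ereal (gen_div p A P)"
  shows "locally_le_chi_square d A a"
  unfolding locally_le_chi_square_def
proof (intro allI impI)
  fix c assume "a / 2 < c"
  then obtain \<rho> where \<rho>: "0 < \<rho>" "\<rho> < 1"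
    and le: "\<forall>P. (\<forall>x. \<bar>P x / A x - 1\<bar> \<le> \<rho>) \<longrightarrow> gen_div p A P \<le> c * chi_square A P"
    using gen_div_le_chi_square[OF A] by blast
  have "d A P \<le> ereal (c * chi_square A P)" if P: "P \<in> pdists" and near: "\<forall>x. \<bar>P x / A x - 1\<bar> \<le> \<rho>" for P
  proof -
    have "0 < P x" for x
      by (rule pos_if_ratio_near_one[of A x P \<rho>]) (use A near \<rho>(2) in auto)
    then show ?thesis using d[OF P] le near by simp
  qed
  then show "\<exists>\<rho>>0. \<forall>P\<in>pdists. (\<forall>x. \<bar>P x / A x - 1\<bar> \<le> \<rho>) \<longrightarrow> d A P \<le> ereal (c * chi_square A P)"
    using \<rho>(1) by blast
qed

lemma (in divergence_generator) locally_ge_chi_square_if_gen_div: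
  assumes A: "\<forall>x. 0 < A x"
    and d: "\<And>P. P \<in> pdists \<Longrightarrow> \<forall>x. 0 < P x \<Longrightarrow> d A P = ereal (gen_div p A P)"
    and zeros: "\<exists>m>0. \<forall>P\<in>pdists. (\<exists>x. P x = 0) \<longrightarrow> ereal m \<le> d A P"
  shows "locally_ge_chi_square d A a"
  unfolding locally_ge_chi_square_def
proof (intro allI impI)
  fix c assume "0 < c \<and> c < a / 2"
  then obtain \<kappa> where \<kappa>: "0 < \<kappa>"
    and ge: "\<forall>P. (\<forall>x. 0 < P x) \<longrightarrow> gen_div p A P \<le> \<kappa> \<longrightarrow> c * chi_square A P \<le> gen_div p A P"
    using chi_square_le_gen_div[OF A] by blast
  obtain m where m: "0 < m" "\<forall>P\<in>pdists. (\<exists>x. P x = 0) \<longrightarrow> ereal m \<le> d A P"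
    using zeros by blast
  have "ereal (c * chi_square A P) \<le> d A P"
    if P: "P \<in> pdists" and small: "d A P \<le> ereal (min \<kappa> (m / 2))" for P
  proof -
    have "\<forall>x. 0 < P x"
    proof (rule ccontr)
      assume "\<not> (\<forall>x. 0 < P x)"
      then obtain x where "\<not> 0 < P x" by blast
      then have "P x = 0" using pdists_nonneg[OF P, of x] by simp
      then have "ereal m \<le> d A P" using m(2) P by blast
      then have "ereal m \<le> ereal (min \<kappa> (m / 2))" using small by (rule order.trans)
      then show False using m(1) by simp
    qed
    then have "gen_div p A P \<le> \<kappa>" using d[OF P] small by simp
    then show ?thesis using d[OF P] ge \<open>\<forall>x. 0 < P x\<close> by simp
  qed
  moreover have "0 < min \<kappa> (m / 2)" using \<kappa> m(1) by simp
  ultimately show "\<exists>\<kappa>>0. \<forall>P\<in>pdists. d A P \<le> ereal \<kappa> \<longrightarrow> ereal (c * chi_square A P) \<le> d A P"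
    by blast
qed

lemma KL_eq_sum:
  assumes "\<forall>x. 0 < P x"
  shows "KL Q P = ereal (\<Sum>x\<in>UNIV. Q x * ln (Q x / P x))"
  using assms unfolding KL_def by (auto intro!: sum.cong simp: less_imp_neq[symmetric])

lemma KL_generator: "divergence_generator (\<lambda>t. t - 1 - ln t) (\<lambda>t. 1 - 1 / t) 1"
  by unfold_locales (auto intro!: derivative_eq_intros simp: field_simps)

lemma KL_locally_chi_square:
  assumes A: "A \<in> pdists" "\<forall>x. 0 < A x"
  shows "locally_ge_chi_square KL A 1" "locally_le_chi_square KL A 1"
proof -
  interpret divergence_generator "\<lambda>t. t - 1 - ln t" "\<lambda>t. 1 - 1 / t" 1
    by (rule KL_generator)
  have KL_eq: "KL A P = ereal (gen_div (\<lambda>t. t - 1 - ln t) A P)"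
    if P: "P \<in> pdists" "\<forall>x. 0 < P x" for P
  proof -
    have "A x * (P x / A x - 1 - ln (P x / A x)) = P x - A x + A x * ln (A x / P x)" for x
      using A(2)[rule_format, of x] P(2)[rule_format, of x] by (simp add: ln_div field_simps)
    then show ?thesis
      by (simp add: KL_eq_sum[OF P(2)] gen_div_def sum.distrib sum_subtractf pdists_sum[OF P(1)] pdists_sum[OF A(1)])
  qed
  have zeros: "\<exists>m>0. \<forall>P\<in>pdists. (\<exists>x. P x = 0) \<longrightarrow> ereal m \<le> KL A P"
    using A(2) by (intro exI[of _ 1]) (auto simp: KL_def)
  show "locally_ge_chi_square KL A 1"
    by (rule locally_ge_chi_square_if_gen_div[where d = KL, OF A(2) _ zeros]) (fact KL_eq)
  show "locally_le_chi_square KL A 1"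
    by (rule locally_le_chi_square_if_gen_div[where d = KL, OF A(2)]) (fact KL_eq)
qed

definition renyi_gen :: "real \<Rightarrow> real \<Rightarrow> real" where
  "renyi_gen \<alpha> t = (t powr (1 - \<alpha>) - 1 - (1 - \<alpha>) * (t - 1)) / (\<alpha> - 1)"

(* The Renyi divergence is this monotone transform of the divergence with generator renyi_gen. *)
definition renyi_transform :: "real \<Rightarrow> real \<Rightarrow> real" where
  "renyi_transform \<alpha> u = ln (1 + (\<alpha> - 1) * u) / (\<alpha> - 1)"

lemma renyi_generator:
  assumes "0 < \<alpha>" "\<alpha> \<noteq> 1"
  shows "divergence_generator (renyi_gen \<alpha>) (\<lambda>t. 1 - t powr (- \<alpha>)) \<alpha>"
proof
  show "(renyi_gen \<alpha> has_real_derivative 1 - t powr (- \<alpha>)) (at t)" if "0 < t" for t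
  proof -
    have "((\<lambda>t. (t powr (1 - \<alpha>) - 1 - (1 - \<alpha>) * (t - 1)) / (\<alpha> - 1)) has_real_derivative
            ((1 - \<alpha>) * t powr (1 - \<alpha> - 1) - (1 - \<alpha>)) / (\<alpha> - 1)) (at t)"
      using that assms by (auto intro!: derivative_eq_intros)
    moreover have "((1 - \<alpha>) * t powr (1 - \<alpha> - 1) - (1 - \<alpha>)) / (\<alpha> - 1) = 1 - t powr (- \<alpha>)"
      using assms by (simp add: field_simps)
    ultimately show ?thesis unfolding renyi_gen_def[abs_def] by simp
  qed
  have "((\<lambda>t. 1 - t powr (- \<alpha>)) has_real_derivative 0 - (- \<alpha>) * 1 powr (- \<alpha> - 1)) (at 1)"
    by (auto intro!: derivative_eq_intros)
  then show "((\<lambda>t. 1 - t powr (- \<alpha>)) has_real_derivative \<alpha>) (at 1)"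
    by simp
  show "1 - t powr (- \<alpha>) \<le> 0" if "0 < t" "t < 1" for t
    using powr_less_mono2_neg[of "- \<alpha>" t 1] that assms by simp
  show "0 \<le> 1 - t powr (- \<alpha>)" if "1 < t" for t
    using powr_less_mono2_neg[of "- \<alpha>" 1 t] that assms by simp
qed (simp_all add: renyi_gen_def)

lemma renyi_sum_eq:
  assumes A: "A \<in> pdists" "\<forall>x. 0 < A x" and P: "P \<in> pdists" and \<alpha>: "\<alpha> \<noteq> 1"
  shows "(\<Sum>x\<in>UNIV. A x powr \<alpha> * P x powr (1 - \<alpha>)) = 1 + (\<alpha> - 1) * gen_div (renyi_gen \<alpha>) A P"
proof -
  have "A x powr \<alpha> * P x powr (1 - \<alpha>)
          = (\<alpha> - 1) * (A x * renyi_gen \<alpha> (P x / A x)) + A x + (1 - \<alpha>) * (P x - A x)" for x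
  proof -
    have a: "0 < A x" using A(2) by simp
    have "A x powr \<alpha> * P x powr (1 - \<alpha>) = A x * (P x / A x) powr (1 - \<alpha>)"
      using a pdists_nonneg[OF P, of x] by (simp add: powr_divide powr_diff field_simps)
    then show ?thesis using a \<alpha> by (simp add: renyi_gen_def field_simps)
  qed
  moreover have "(\<Sum>x\<in>UNIV. (1 - \<alpha>) * (P x - A x)) = 0"
    by (simp add: sum_distrib_left[symmetric] sum_subtractf pdists_sum[OF A(1)] pdists_sum[OF P])
  ultimately show ?thesis
    by (simp add: gen_div_def sum.distrib sum_distrib_left pdists_sum[OF A(1)])
qed

lemma renyi_div_eq_transform:
  assumes A: "A \<in> pdists" "\<forall>x. 0 < A x" and P: "P \<in> pdists" and \<alpha>: "\<alpha> \<noteq> 1"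
    and supp: "\<alpha> < 1 \<or> (\<forall>x. 0 < P x)"
  shows "renyi_div \<alpha> A P = ereal (renyi_transform \<alpha> (gen_div (renyi_gen \<alpha>) A P))"
    and "0 < 1 + (\<alpha> - 1) * gen_div (renyi_gen \<alpha>) A P"
proof -
  have "\<exists>x. 0 < P x"
  proof (rule ccontr)
    assume "\<nexists>x. 0 < P x"
    then have "P x = 0" for x using pdists_nonneg[OF P, of x] by (auto simp: le_less)
    then show False using pdists_sum[OF P] by simp
  qed
  then obtain x0 where "0 < P x0" ..
  then have "0 < A x0 powr \<alpha> * P x0 powr (1 - \<alpha>)"
    using A(2)[rule_format, of x0] by simp
  then have sum_pos: "0 < (\<Sum>x\<in>UNIV. A x powr \<alpha> * P x powr (1 - \<alpha>))"
    by (intro sum_pos2[of UNIV x0]) auto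
  then show "0 < 1 + (\<alpha> - 1) * gen_div (renyi_gen \<alpha>) A P"
    using renyi_sum_eq[OF A P \<alpha>] by simp
  have "\<not> (1 < \<alpha> \<and> (\<exists>x. 0 < A x \<and> P x = 0))"
    using supp by (auto simp: less_imp_neq[symmetric])
  then have "renyi_div \<alpha> A P = ereal (ln (\<Sum>x\<in>UNIV. A x powr \<alpha> * P x powr (1 - \<alpha>)) / (\<alpha> - 1))"
    using \<alpha> sum_pos unfolding renyi_div_def Let_def by simp
  then show "renyi_div \<alpha> A P = ereal (renyi_transform \<alpha> (gen_div (renyi_gen \<alpha>) A P))"
    by (simp add: renyi_sum_eq[OF A P \<alpha>] renyi_transform_def)
qed

lemma renyi_transform_bounds:
  assumes u: "0 \<le> u" and \<alpha>: "\<alpha> \<noteq> 1" and s: "0 < 1 + (\<alpha> - 1) * u"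
  shows "u / max 1 (1 + (\<alpha> - 1) * u) \<le> renyi_transform \<alpha> u"
    and "renyi_transform \<alpha> u \<le> u / min 1 (1 + (\<alpha> - 1) * u)"
proof -
  define s where "s = 1 + (\<alpha> - 1) * u"
  have s_pos: "0 < s" using s by (simp add: s_def)
  have ln_le: "ln s \<le> (\<alpha> - 1) * u"
    using ln_le_minus_one[OF s_pos] by (simp add: s_def)
  have ln_ge: "(\<alpha> - 1) * u / s \<le> ln s"
    using ln_le_minus_one[of "1 / s"] s_pos by (simp add: ln_div s_def field_simps)
  have "u / max 1 s \<le> renyi_transform \<alpha> u \<and> renyi_transform \<alpha> u \<le> u / min 1 s"
  proof (cases "1 < \<alpha>")
    case True
    then have "1 \<le> s" using u by (simp add: s_def)
    moreover have "u / s \<le> ln s / (\<alpha> - 1)" "ln s / (\<alpha> - 1) \<le> u"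
      using ln_ge ln_le True by (simp_all add: field_simps)
    ultimately show ?thesis by (simp add: renyi_transform_def s_def[symmetric])
  next
    case False
    then have "\<alpha> < 1" using \<alpha> by simp
    then have "s \<le> 1" using u by (simp add: s_def mult_nonpos_nonneg)
    moreover have "u \<le> ln s / (\<alpha> - 1)" "ln s / (\<alpha> - 1) \<le> u / s"
      using ln_ge ln_le \<open>\<alpha> < 1\<close> s_pos by (simp_all add: field_simps)
    ultimately show ?thesis by (simp add: renyi_transform_def s_def[symmetric])
  qed
  then show "u / max 1 (1 + (\<alpha> - 1) * u) \<le> renyi_transform \<alpha> u"
    and "renyi_transform \<alpha> u \<le> u / min 1 (1 + (\<alpha> - 1) * u)"
    by (simp_all add: s_def)
qed

lemma renyi_transform_le_imp_le:
  assumes \<alpha>: "\<alpha> \<noteq> 1" and "0 < 1 + (\<alpha> - 1) * u" "0 < 1 + (\<alpha> - 1) * v"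
    and le: "renyi_transform \<alpha> u \<le> renyi_transform \<alpha> v"
  shows "u \<le> v"
proof (cases "1 < \<alpha>")
  case True
  then have "ln (1 + (\<alpha> - 1) * u) \<le> ln (1 + (\<alpha> - 1) * v)"
    using le by (simp add: renyi_transform_def divide_right_mono_neg divide_le_cancel)
  then show ?thesis using assms(2,3) True by simp
next
  case False
  then have "ln (1 + (\<alpha> - 1) * v) \<le> ln (1 + (\<alpha> - 1) * u)"
    using le \<alpha> by (simp add: renyi_transform_def divide_le_cancel)
  then show ?thesis using assms(2,3) False \<alpha> by (simp add: mult_le_cancel_left)
qed

lemma renyi_gen_div_zero:
  assumes A: "\<forall>x. 0 < A x" and P: "P \<in> pdists" and zero: "P x0 = 0" and \<alpha>: "0 < \<alpha>" "\<alpha> < 1"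
  shows "(MIN x. A x) * (\<alpha> / (1 - \<alpha>)) \<le> gen_div (renyi_gen \<alpha>) A P"
proof -
  interpret divergence_generator "renyi_gen \<alpha>" "\<lambda>t. 1 - t powr (- \<alpha>)" \<alpha>
    using renyi_generator \<alpha> by simp
  have terms_nonneg: "0 \<le> A x * renyi_gen \<alpha> (P x / A x)" for x
  proof (cases "P x = 0")
    case True
    then show ?thesis using A \<alpha> by (simp add: renyi_gen_def field_simps less_imp_le)
  next
    case False
    then have "0 < P x / A x" using A pdists_nonneg[OF P, of x] by simp
    then show ?thesis using A by (simp add: nonneg less_imp_le)
  qed
  have "(MIN x. A x) * (\<alpha> / (1 - \<alpha>)) \<le> A x0 * (\<alpha> / (1 - \<alpha>))"
    using \<alpha> by (intro mult_right_mono) auto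
  also have "\<dots> = A x0 * renyi_gen \<alpha> (P x0 / A x0)"
    using zero \<alpha>(2) by (simp add: renyi_gen_def divide_simps) (simp add: algebra_simps)
  also have "\<dots> \<le> gen_div (renyi_gen \<alpha>) A P"
    unfolding gen_div_def by (rule member_le_sum) (use terms_nonneg in auto)
  finally show ?thesis .
qed

lemma renyi_transform_le_div:
  assumes "0 \<le> u" "\<alpha> \<noteq> 1" "0 < q" "q \<le> 1" "\<bar>\<alpha> - 1\<bar> * u \<le> 1 - q"
  shows "renyi_transform \<alpha> u \<le> u / q"
proof -
  have "\<bar>(\<alpha> - 1) * u\<bar> = \<bar>\<alpha> - 1\<bar> * u"
    using assms(1) by (simp add: abs_mult)
  then have s: "q \<le> 1 + (\<alpha> - 1) * u"
    using abs_ge_minus_self[of "(\<alpha> - 1) * u"] assms(5) by linarith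
  then have "renyi_transform \<alpha> u \<le> u / min 1 (1 + (\<alpha> - 1) * u)"
    using renyi_transform_bounds(2)[OF assms(1,2)] assms(3) by simp
  also have "\<dots> \<le> u / q"
    using s assms(1,3,4) by (intro divide_left_mono mult_pos_pos) auto
  finally show ?thesis .
qed

lemma renyi_transform_ge_div:
  assumes "0 \<le> u" "\<alpha> \<noteq> 1" "1 \<le> q" "0 < 1 + (\<alpha> - 1) * u" "\<bar>\<alpha> - 1\<bar> * u \<le> q - 1"
  shows "u / q \<le> renyi_transform \<alpha> u"
proof -
  have "\<bar>(\<alpha> - 1) * u\<bar> = \<bar>\<alpha> - 1\<bar> * u"
    using assms(1) by (simp add: abs_mult)
  then have s: "1 + (\<alpha> - 1) * u \<le> q"
    using abs_ge_self[of "(\<alpha> - 1) * u"] assms(5) by linarith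
  have "u / q \<le> u / max 1 (1 + (\<alpha> - 1) * u)"
    using s assms(1,3) by (intro divide_left_mono mult_pos_pos) auto
  also have "\<dots> \<le> renyi_transform \<alpha> u"
    using renyi_transform_bounds(1)[OF assms(1,2,4)] .
  finally show ?thesis .
qed

lemma exists_pos_le_mult_less:
  fixes b e K :: real
  assumes "0 < b" "0 < e"
  shows "\<exists>u>0. u \<le> b \<and> K * u < e"
proof -
  define u where "u = min b (e / (\<bar>K\<bar> + 1))"
  have u: "0 < u" "u \<le> b" "u * (\<bar>K\<bar> + 1) \<le> e"
    using assms by (auto simp: u_def min_def pos_le_divide_eq[symmetric] not_le intro: less_imp_le)
  have "K * u \<le> \<bar>K\<bar> * u"
    using u(1) by (simp add: mult_right_mono)
  also have "\<dots> < u * (\<bar>K\<bar> + 1)"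
    using u(1) by (simp add: algebra_simps)
  also have "\<dots> \<le> e"
    by (rule u(3))
  finally show ?thesis using u by (intro exI[of _ u]) auto
qed

lemma renyi_locally_le_chi_square:
  assumes A: "A \<in> pdists" "\<forall>x. 0 < A x" and \<alpha>: "0 < \<alpha>" "\<alpha> \<noteq> 1"
  shows "locally_le_chi_square (renyi_div \<alpha>) A \<alpha>"
  unfolding locally_le_chi_square_def
proof (intro allI impI)
  fix c assume c: "\<alpha> / 2 < c"
  interpret divergence_generator "renyi_gen \<alpha>" "\<lambda>t. 1 - t powr (- \<alpha>)" \<alpha>
    using renyi_generator \<alpha> by simp
  define c1 where "c1 = (\<alpha> / 2 + c) / 2"
  have c1: "\<alpha> / 2 < c1" "c1 < c" "0 < c1"
    using c \<alpha> by (auto simp: c1_def)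
  obtain \<rho>1 where \<rho>1: "0 < \<rho>1" "\<rho>1 < 1"
    and le: "\<forall>P. (\<forall>x. \<bar>P x / A x - 1\<bar> \<le> \<rho>1) \<longrightarrow> gen_div (renyi_gen \<alpha>) A P \<le> c1 * chi_square A P"
    using gen_div_le_chi_square[OF A(2) c1(1)] by blast
  have "0 < 1 - c1 / c"
    using c1 by (auto simp: divide_less_eq_1)
  then obtain \<rho> where \<rho>: "0 < \<rho>" "\<rho> \<le> \<rho>1" and \<rho>_small: "\<bar>\<alpha> - 1\<bar> * c1 * \<rho> < 1 - c1 / c"
    using exists_pos_le_mult_less[OF \<rho>1(1), of "1 - c1 / c" "\<bar>\<alpha> - 1\<bar> * c1"] by auto
  have "renyi_div \<alpha> A P \<le> ereal (c * chi_square A P)"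
    if P: "P \<in> pdists" and near: "\<forall>x. \<bar>P x / A x - 1\<bar> \<le> \<rho>" for P
  proof -
    define U where "U = gen_div (renyi_gen \<alpha>) A P"
    have P_pos: "\<forall>x. 0 < P x"
      using \<rho> \<rho>1 by (intro allI pos_if_ratio_near_one[of A _ P \<rho>]) (use A near in auto)
    have U_nonneg: "0 \<le> U"
      unfolding U_def by (rule gen_div_nonneg[OF A(2) P_pos])
    have U_le: "U \<le> c1 * chi_square A P"
      unfolding U_def using le near \<rho>(2) by (meson order_trans)
    also have "\<dots> \<le> c1 * \<rho>"
    proof -
      have "\<rho> * \<rho> \<le> \<rho>"
        using \<rho> \<rho>1 by (intro mult_left_le) auto
      then show ?thesis
        using chi_square_le[OF A(1) near] c1 by (intro mult_left_mono) (auto simp: power2_eq_square)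
    qed
    finally have "\<bar>\<alpha> - 1\<bar> * U \<le> \<bar>\<alpha> - 1\<bar> * (c1 * \<rho>)"
      by (rule mult_left_mono) simp
    then have "\<bar>\<alpha> - 1\<bar> * U \<le> 1 - c1 / c"
      using \<rho>_small by (simp add: mult.assoc)
    then have "renyi_transform \<alpha> U \<le> U / (c1 / c)"
      using U_nonneg \<alpha>(2) c1 by (intro renyi_transform_le_div) auto
    also have "\<dots> \<le> c * chi_square A P"
      using U_le c1 by (simp add: field_simps)
    finally show ?thesis
      using renyi_div_eq_transform(1)[OF A P \<alpha>(2)] P_pos by (simp add: U_def)
  qed
  then show "\<exists>\<rho>>0. \<forall>P\<in>pdists. (\<forall>x. \<bar>P x / A x - 1\<bar> \<le> \<rho>) \<longrightarrow> renyi_div \<alpha> A P \<le> ereal (c * chi_square A P)"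
    using \<rho>(1) by blast
qed

lemma renyi_div_le_transform_imp:
  assumes A: "A \<in> pdists" "\<forall>x. 0 < A x" and \<alpha>: "0 < \<alpha>" "\<alpha> \<noteq> 1" and P: "P \<in> pdists"
    and u: "0 < 1 + (\<alpha> - 1) * u" "\<alpha> < 1 \<Longrightarrow> u < (MIN x. A x) * (\<alpha> / (1 - \<alpha>))"
    and le: "renyi_div \<alpha> A P \<le> ereal (renyi_transform \<alpha> u)"
  shows "\<forall>x. 0 < P x" and "gen_div (renyi_gen \<alpha>) A P \<le> u"
proof -
  have supp: "\<alpha> < 1 \<or> (\<forall>x. 0 < P x)"
  proof (rule ccontr)
    assume "\<not> (\<alpha> < 1 \<or> (\<forall>x. 0 < P x))"
    then obtain x where "1 < \<alpha>" "P x = 0"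
      using \<alpha>(2) pdists_nonneg[OF P] by (auto simp: le_less)
    then have "renyi_div \<alpha> A P = \<infinity>"
      using A(2) by (auto simp: renyi_div_def)
    then show False using le by simp
  qed
  have "renyi_transform \<alpha> (gen_div (renyi_gen \<alpha>) A P) \<le> renyi_transform \<alpha> u"
    using le renyi_div_eq_transform(1)[OF A P \<alpha>(2) supp] by simp
  then show U_le: "gen_div (renyi_gen \<alpha>) A P \<le> u"
    using renyi_transform_le_imp_le \<alpha>(2) renyi_div_eq_transform(2)[OF A P \<alpha>(2) supp] u(1) by blast
  show "\<forall>x. 0 < P x"
  proof (rule ccontr)
    assume "\<not> (\<forall>x. 0 < P x)"
    then obtain x where "P x = 0"
      using pdists_nonneg[OF P] by (auto simp: le_less)
    moreover have "\<alpha> < 1"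
      using supp \<open>\<not> (\<forall>x. 0 < P x)\<close> by blast
    ultimately show False
      using renyi_gen_div_zero[OF A(2) P _ \<alpha>(1)] U_le u(2) by fastforce
  qed
qed

lemma renyi_transform_threshold:
  assumes \<alpha>: "\<alpha> \<noteq> 1" and b: "0 < b" and q: "1 < q"
  shows "\<exists>u>0. u \<le> b \<and> \<bar>\<alpha> - 1\<bar> * u \<le> q - 1 \<and> 0 < 1 + (\<alpha> - 1) * u \<and> 0 < renyi_transform \<alpha> u"
proof -
  obtain u where u: "0 < u" "u \<le> b" and small: "\<bar>\<alpha> - 1\<bar> * u < min (q - 1) 1"
    using exists_pos_le_mult_less[OF b, of "min (q - 1) 1" "\<bar>\<alpha> - 1\<bar>"] q by auto
  have s: "0 < 1 + (\<alpha> - 1) * u"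
    using small u(1) abs_ge_minus_self[of "(\<alpha> - 1) * u"] by (simp add: abs_mult)
  have "0 < u / max 1 (1 + (\<alpha> - 1) * u)"
    using u(1) by simp
  then have "0 < renyi_transform \<alpha> u"
    using renyi_transform_bounds(1)[OF less_imp_le[OF u(1)] \<alpha> s] by linarith
  then show ?thesis using u small s by (intro exI[of _ u]) auto
qed

lemma renyi_locally_ge_chi_square:
  assumes A: "A \<in> pdists" "\<forall>x. 0 < A x" and \<alpha>: "0 < \<alpha>" "\<alpha> \<noteq> 1"
  shows "locally_ge_chi_square (renyi_div \<alpha>) A \<alpha>"
  unfolding locally_ge_chi_square_def
proof (intro allI impI)
  fix c assume c: "0 < c \<and> c < \<alpha> / 2"
  interpret divergence_generator "renyi_gen \<alpha>" "\<lambda>t. 1 - t powr (- \<alpha>)" \<alpha>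
    using renyi_generator \<alpha> by simp
  define c1 where "c1 = (c + \<alpha> / 2) / 2"
  define q where "q = c1 / c"
  have c1: "0 < c1" "c1 < \<alpha> / 2" and q: "1 < q"
    using c by (auto simp: c1_def q_def field_simps)
  obtain \<kappa>1 where \<kappa>1: "0 < \<kappa>1"
    and ge: "\<forall>P. (\<forall>x. 0 < P x) \<longrightarrow> gen_div (renyi_gen \<alpha>) A P \<le> \<kappa>1 \<longrightarrow> c1 * chi_square A P \<le> gen_div (renyi_gen \<alpha>) A P"
    using chi_square_le_gen_div[OF A(2) c1] by blast
  define m where "m = (MIN x. A x) * (\<alpha> / \<bar>1 - \<alpha>\<bar>)"
    \<comment> \<open>needed only for \<alpha> < 1: for \<alpha> > 1 a zero of P makes the divergence infinite\<close>
  have "0 < m"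
    using A(2) \<alpha> by (simp add: m_def Min_gr_iff)
  then obtain u where u: "0 < u" "u \<le> min \<kappa>1 (m / 2)" and u_small: "\<bar>\<alpha> - 1\<bar> * u \<le> q - 1"
    and s: "0 < 1 + (\<alpha> - 1) * u" and \<kappa>: "0 < renyi_transform \<alpha> u"
    using renyi_transform_threshold[OF \<alpha>(2), of "min \<kappa>1 (m / 2)" q] \<kappa>1 q by auto
  have "u < m"
    using u(2) \<open>0 < m\<close> by linarith
  then have zero_bound: "\<alpha> < 1 \<Longrightarrow> u < (MIN x. A x) * (\<alpha> / (1 - \<alpha>))"
    by (simp add: m_def)
  have "ereal (c * chi_square A P) \<le> renyi_div \<alpha> A P"
    if P: "P \<in> pdists" and le: "renyi_div \<alpha> A P \<le> ereal (renyi_transform \<alpha> u)" for P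
  proof -
    define U where "U = gen_div (renyi_gen \<alpha>) A P"
    have P_pos: "\<forall>x. 0 < P x" and U_le: "U \<le> u"
      using renyi_div_le_transform_imp[OF A \<alpha> P s zero_bound le] by (simp_all add: U_def)
    have U_nonneg: "0 \<le> U"
      unfolding U_def by (rule gen_div_nonneg[OF A(2) P_pos])
    have "c * chi_square A P = c1 * chi_square A P / q"
      using c c1 by (simp add: q_def)
    also have "\<dots> \<le> U / q"
      using ge P_pos U_le u(2) q by (intro divide_right_mono) (auto simp: U_def)
    also have "\<dots> \<le> renyi_transform \<alpha> U"
    proof (rule renyi_transform_ge_div[OF U_nonneg \<alpha>(2)])
      show "0 < 1 + (\<alpha> - 1) * U"
        unfolding U_def using renyi_div_eq_transform(2)[OF A P \<alpha>(2)] P_pos by blast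
      have "\<bar>\<alpha> - 1\<bar> * U \<le> \<bar>\<alpha> - 1\<bar> * u"
        using U_le by (simp add: mult_left_mono)
      then show "\<bar>\<alpha> - 1\<bar> * U \<le> q - 1"
        using u_small by (rule order_trans)
    qed (use q in simp)
    finally show ?thesis
      using renyi_div_eq_transform(1)[OF A P \<alpha>(2)] P_pos by (simp add: U_def)
  qed
  then show "\<exists>\<kappa>>0. \<forall>P\<in>pdists. renyi_div \<alpha> A P \<le> ereal \<kappa> \<longrightarrow> ereal (c * chi_square A P) \<le> renyi_div \<alpha> A P"
    using \<kappa> by blast
qed

locale convex_generator =
  fixes f f' f'' :: "real \<Rightarrow> real"
  assumes convex: "convex_on {0..} f"
    and f_one: "f 1 = 0"
    and f_deriv: "\<And>t. 0 < t \<Longrightarrow> (f has_real_derivative f' t) (at t)"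
    and f'_deriv: "\<And>t. 0 < t \<Longrightarrow> (f' has_real_derivative f'' t) (at t)"
begin

lemma above_tangent:
  assumes "0 < s" "0 \<le> y"
  shows "f s + f' s * (y - s) \<le> f y"
proof -
  have "f' s * (y - s) \<le> f y - f s"
  proof (rule convex_on_imp_above_tangent[OF convex])
    show "(f has_field_derivative f' s) (at s within {0..})"
      using f_deriv[OF assms(1)] by (rule has_field_derivative_at_within)
  qed (use assms in \<open>auto simp: is_interval_connected\<close>)
  then show ?thesis by simp
qed

lemma f'_mono:
  assumes "0 < s" "s \<le> u"
  shows "f' s \<le> f' u"
proof -
  have "(f' u - f' s) * (u - s) \<ge> 0"
    using above_tangent[of s u] above_tangent[of u s] assms by (simp add: algebra_simps)
  then show ?thesis using assms by (cases "s = u") (auto simp: zero_le_mult_iff)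
qed

(* Since \<Sum>\<^sub>x P x f(A x / P x) = \<Sum>\<^sub>x A x psi(P x / A x) for distributions A, P of full support,
   D\<^sub>f(A||P) is the divergence from A with generator psi: the conjugate t f(1/t) of f, plus a
   multiple of t - 1 (which sums to zero) chosen to make psi'(1) = 0. *)
definition psi :: "real \<Rightarrow> real" where
  "psi t = t * f (1 / t) + f' 1 * (t - 1)"

definition psi' :: "real \<Rightarrow> real" where
  "psi' t = f (1 / t) - f' (1 / t) / t + f' 1"

lemma inverse_has_derivative: "0 < t \<Longrightarrow> ((\<lambda>t::real. 1 / t) has_real_derivative - 1 / t\<^sup>2) (at t)"
  by (auto intro!: derivative_eq_intros simp: power2_eq_square field_simps)

lemma psi_deriv:
  assumes "0 < t"
  shows "(psi has_real_derivative psi' t) (at t)"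
proof -
  have "((\<lambda>t. t * f (1 / t) + f' 1 * (t - 1)) has_real_derivative
          1 * f (1 / t) + f' (1 / t) * (- 1 / t\<^sup>2) * t + f' 1) (at t)"
    using assms by (intro derivative_intros DERIV_chain2[OF f_deriv inverse_has_derivative]
        derivative_eq_intros) auto
  moreover have "1 * f (1 / t) + f' (1 / t) * (- 1 / t\<^sup>2) * t + f' 1 = psi' t"
    using assms by (simp add: psi'_def power2_eq_square field_simps)
  ultimately show ?thesis unfolding psi_def[abs_def] by simp
qed

lemma psi'_deriv_one: "(psi' has_real_derivative f'' 1) (at 1)"
proof -
  have "((\<lambda>t. f (1 / t) - f' (1 / t) / t + f' 1) has_real_derivative
          f' (1 / 1) * (- 1 / 1\<^sup>2) - ((f'' (1 / 1) * (- 1 / 1\<^sup>2)) * 1 - f' (1 / 1) * 1) / (1 * 1) + 0)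
          (at 1)"
    by (intro derivative_intros DERIV_chain2[OF f_deriv inverse_has_derivative]
        DERIV_chain2[OF f'_deriv inverse_has_derivative]) auto
  then show ?thesis unfolding psi'_def[abs_def] by simp
qed

lemma psi'_eq: "0 < t \<Longrightarrow> psi' t = f (1 / t) - (1 / t) * f' (1 / t) + f' 1"
  by (simp add: psi'_def)

sublocale gen: divergence_generator psi psi' "f'' 1"
proof
  show "(psi has_real_derivative psi' t) (at t)" if "0 < t" for t
    using that by (rule psi_deriv)
  show "psi 1 = 0" "psi' 1 = 0"
    by (simp_all add: psi_def psi'_def f_one)
  show "(psi' has_real_derivative f'' 1) (at 1)"
    by (rule psi'_deriv_one)
  show "psi' t \<le> 0" if "0 < t" "t < 1" for t
  proof -
    define s where "s = 1 / t"
    have s: "1 < s" using that by (simp add: s_def)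
    have "f s + f' s * (1 - s) \<le> 0" using above_tangent[of s 1] s f_one by simp
    moreover have "f' 1 \<le> f' s" using f'_mono[of 1 s] s by simp
    ultimately show ?thesis using that by (simp add: psi'_eq s_def[symmetric] algebra_simps)
  qed
  show "0 \<le> psi' t" if "1 < t" for t
  proof -
    define s where "s = 1 / t"
    have s: "0 < s" "s < 1" using that by (auto simp: s_def)
    have "f' 1 * (s - 1) \<le> f s" using above_tangent[of 1 s] s f_one by simp
    moreover have "s * f' s \<le> s * f' 1" using f'_mono[of s 1] s by simp
    ultimately show ?thesis using that by (simp add: psi'_eq s_def[symmetric] algebra_simps)
  qed
qed

lemma f_div_eq_gen_div:
  assumes A: "A \<in> pdists" "\<forall>x. 0 < A x" and P: "P \<in> pdists" "\<forall>x. 0 < P x"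
  shows "f_div f A P = ereal (gen_div psi A P)"
proof -
  have "f_div f A P = (\<Sum>x\<in>UNIV. ereal (P x * f (A x / P x)))"
    unfolding f_div_def using P(2) by (intro sum.cong) (auto simp: less_imp_neq[symmetric])
  also have "\<dots> = ereal (\<Sum>x\<in>UNIV. P x * f (A x / P x))"
    by (rule sum_ereal)
  also have "A x * psi (P x / A x) = P x * f (A x / P x) + f' 1 * (P x - A x)" for x
    using A(2)[rule_format, of x] P(2)[rule_format, of x] by (simp add: psi_def field_simps)
  then have "(\<Sum>x\<in>UNIV. P x * f (A x / P x)) = gen_div psi A P"
    by (simp add: gen_div_def sum.distrib sum_distrib_left[symmetric] sum_subtractf
        pdists_sum[OF A(1)] pdists_sum[OF P(1)])
  finally show ?thesis .
qed

lemma slope_tendsto: "\<exists>L. ((\<lambda>t. ereal (f t / t)) \<longlongrightarrow> L) at_top"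
proof -
  define q where "q u = (f u - f 0) / u" for u
  have q_mono: "q u \<le> q v" if "0 < u" "u \<le> v" for u v
    using convex_on_slope_le(1)[OF convex, of 0 v u] that
    by (cases "u = v") (auto simp: q_def diff_divide_distrib)
  define S where "S = (SUP u\<in>{0<..}. ereal (q u))"
  have qS: "((\<lambda>u. ereal (q u)) \<longlongrightarrow> S) at_top"
  proof (rule increasing_tendsto)
    show "\<forall>\<^sub>F u in at_top. ereal (q u) \<le> S"
      using eventually_gt_at_top[of 0] by eventually_elim (auto simp: S_def intro: SUP_upper)
  next
    fix x assume "x < S"
    then obtain u0 where u0: "0 < u0" "x < ereal (q u0)"
      unfolding S_def by (auto simp: less_SUP_iff)
    show "\<forall>\<^sub>F u in at_top. x < ereal (q u)"
      using eventually_ge_at_top[of u0]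
      by eventually_elim (use u0 q_mono in \<open>meson ereal_less_eq(3) less_le_trans\<close>)
  qed
  have "S \<noteq> - \<infinity>"
    using SUP_upper[of 1 "{0<..}" "\<lambda>u. ereal (q u)"] by (auto simp: S_def)
  moreover have "((\<lambda>u. ereal (f 0 / u)) \<longlongrightarrow> ereal 0) at_top"
    by (intro tendsto_ereal tendsto_divide_0[OF tendsto_const] filterlim_at_top_imp_at_infinity
        filterlim_ident)
  ultimately have "((\<lambda>u. ereal (q u) + ereal (f 0 / u)) \<longlongrightarrow> S + ereal 0) at_top"
    using qS by (intro tendsto_add_ereal_nonneg) auto
  moreover have "\<forall>\<^sub>F u in at_top. ereal (q u) + ereal (f 0 / u) = ereal (f u / u)"
    using eventually_gt_at_top[of 0] by eventually_elim (simp add: q_def field_simps)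
  ultimately have "((\<lambda>t. ereal (f t / t)) \<longlongrightarrow> S + ereal 0) at_top"
    by (rule Lim_transform_eventually)
  then show ?thesis by blast
qed

lemma slope_limit_gt:
  assumes "0 < f'' 1"
  shows "\<exists>\<delta>>0. ereal (f' 1 + \<delta>) \<le> Lim at_top (\<lambda>t. ereal (f t / t))"
proof -
  obtain \<rho> where \<rho>: "0 < \<rho>" "\<rho> < 1"
    and far: "\<forall>t>0. \<rho> \<le> \<bar>t - 1\<bar> \<longrightarrow> f'' 1 / 4 * \<rho>\<^sup>2 \<le> psi t"
    using gen.quadratic_lower_bound[of "f'' 1 / 4"] assms by auto
  define m where "m = f'' 1 / 4 * \<rho>\<^sup>2"
  have m: "0 < m" using assms \<rho> by (simp add: m_def)
  obtain L where L: "((\<lambda>t. ereal (f t / t)) \<longlongrightarrow> L) at_top"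
    using slope_tendsto by blast
  have "((\<lambda>u. f' 1 / u) \<longlongrightarrow> 0) at_top"
    by (intro tendsto_divide_0[OF tendsto_const] filterlim_at_top_imp_at_infinity filterlim_ident)
  then have "\<forall>\<^sub>F u in at_top. f' 1 / u < m / 2"
    using m by (intro order_tendstoD(2)) auto
  then have "\<forall>\<^sub>F u in at_top. ereal (f' 1 + m / 2) \<le> ereal (f u / u)"
    using eventually_ge_at_top[of "1 / (1 - \<rho>)"]
  proof eventually_elim
    \<comment> \<open>psi (1 / u) = f u / u - f' 1 + f' 1 / u, and 1 / u is far from 1\<close>
    case (elim u)
    have "0 < 1 / (1 - \<rho>)" using \<rho> by simp
    then have u: "0 < u" using elim by linarith
    have "1 \<le> (1 - \<rho>) * u"
      using elim \<rho> by (simp add: pos_divide_le_eq mult.commute)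
    then have "1 / u \<le> 1 - \<rho>"
      using u by (simp add: pos_divide_le_eq)
    then have "m \<le> psi (1 / u)"
      using far u by (simp add: m_def)
    then show ?case
      using elim u by (simp add: psi_def field_simps)
  qed
  then have "ereal (f' 1 + m / 2) \<le> L"
    by (rule tendsto_lowerbound[OF L _ trivial_limit_at_top_linorder])
  moreover have "Lim at_top (\<lambda>t. ereal (f t / t)) = L"
    by (rule tendsto_Lim[OF trivial_limit_at_top_linorder L])
  ultimately show ?thesis
    using m by (intro exI[of _ "m / 2"]) auto
qed

lemma f_div_ge_mass_of_zeros:
  assumes A: "A \<in> pdists" "\<forall>x. 0 < A x" and P: "P \<in> pdists"
    and L: "ereal (f' 1 + \<delta>) \<le> Lim at_top (\<lambda>t. ereal (f t / t))"
  shows "ereal (\<delta> * (\<Sum>x\<in>UNIV. if P x = 0 then A x else 0)) \<le> f_div f A P"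
proof -
  define b where "b x = f' 1 * (A x - P x) + (if P x = 0 then \<delta> * A x else 0)" for x
  have "ereal (b x) \<le> (if P x = 0 then (if A x = 0 then 0 else ereal (A x) * Lim at_top (\<lambda>t. ereal (f t / t)))
                       else ereal (P x * f (A x / P x)))" for x
  proof (cases "P x = 0")
    case True
    have "ereal (b x) = ereal (A x) * ereal (f' 1 + \<delta>)"
      using True by (simp add: b_def algebra_simps)
    also have "\<dots> \<le> ereal (A x) * Lim at_top (\<lambda>t. ereal (f t / t))"
      using L A(2) by (intro ereal_mult_left_mono) (auto simp: less_imp_le)
    finally show ?thesis using True A(2) by (simp add: less_imp_neq[symmetric])
  next
    case False
    then have p: "0 < P x" using pdists_nonneg[OF P, of x] by simp
    have "f' 1 * (A x / P x - 1) \<le> f (A x / P x)"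
      using above_tangent[of 1 "A x / P x"] p A(2) f_one by (simp add: less_imp_le)
    then have "P x * (f' 1 * (A x / P x - 1)) \<le> P x * f (A x / P x)"
      using p by (simp add: mult_left_mono)
    moreover have "P x * (f' 1 * (A x / P x - 1)) = b x"
      using p False by (simp add: b_def field_simps)
    ultimately show ?thesis using False by simp
  qed
  then have "ereal (\<Sum>x\<in>UNIV. b x) \<le> f_div f A P"
    unfolding f_div_def sum_ereal[symmetric] by (intro sum_mono)
  moreover have "(\<Sum>x\<in>UNIV. b x)
      = f' 1 * ((\<Sum>x\<in>UNIV. A x) - (\<Sum>x\<in>UNIV. P x)) + (\<Sum>x\<in>UNIV. if P x = 0 then \<delta> * A x else 0)"
    by (simp add: b_def sum.distrib sum_distrib_left sum_subtractf algebra_simps)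
  moreover have "(\<Sum>x\<in>UNIV. if P x = 0 then \<delta> * A x else 0) = \<delta> * (\<Sum>x\<in>UNIV. if P x = 0 then A x else 0)"
    by (simp add: sum_distrib_left if_distrib cong: if_cong)
  ultimately show ?thesis by (simp add: pdists_sum[OF A(1)] pdists_sum[OF P])
qed

lemma f_div_zero_bound:
  assumes A: "A \<in> pdists" "\<forall>x. 0 < A x" and f'': "0 < f'' 1"
  shows "\<exists>m>0. \<forall>P\<in>pdists. (\<exists>x. P x = 0) \<longrightarrow> ereal m \<le> f_div f A P"
proof -
  obtain \<delta> where \<delta>: "0 < \<delta>" and L: "ereal (f' 1 + \<delta>) \<le> Lim at_top (\<lambda>t. ereal (f t / t))"
    using slope_limit_gt[OF f''] by blast
  have "ereal (\<delta> * (MIN x. A x)) \<le> f_div f A P" if P: "P \<in> pdists" and "P x0 = 0" for P x0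
  proof -
    have "(MIN x. A x) \<le> A x0"
      by simp
    also have "\<dots> \<le> (\<Sum>x\<in>UNIV. if P x = 0 then A x else 0)"
      using member_le_sum[of x0 UNIV "\<lambda>x. if P x = 0 then A x else 0"] \<open>P x0 = 0\<close> A(2)
      by (simp add: less_imp_le)
    finally have "ereal (\<delta> * (MIN x. A x)) \<le> ereal (\<delta> * (\<Sum>x\<in>UNIV. if P x = 0 then A x else 0))"
      using \<delta> by simp
    also have "\<dots> \<le> f_div f A P"
      by (rule f_div_ge_mass_of_zeros[OF A P L])
    finally show ?thesis .
  qed
  moreover have "0 < \<delta> * (MIN x. A x)"
    using \<delta> A(2) by (simp add: Min_gr_iff)
  ultimately show ?thesis by blast
qed

lemma f_div_locally_chi_square:
  assumes A: "A \<in> pdists" "\<forall>x. 0 < A x" and f'': "0 < f'' 1"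
  shows "locally_ge_chi_square (f_div f) A (f'' 1)" "locally_le_chi_square (f_div f) A (f'' 1)"
proof -
  have eq: "f_div f A P = ereal (gen_div psi A P)" if "P \<in> pdists" "\<forall>x. 0 < P x" for P
    using f_div_eq_gen_div[OF A that] .
  show "locally_ge_chi_square (f_div f) A (f'' 1)"
    by (rule gen.locally_ge_chi_square_if_gen_div[where d = "f_div f", OF A(2) _ f_div_zero_bound[OF A f'']]) (fact eq)
  show "locally_le_chi_square (f_div f) A (f'' 1)"
    by (rule gen.locally_le_chi_square_if_gen_div[where d = "f_div f", OF A(2)]) (fact eq)
qed

end

lemma admissible_div_locally_chi_square:
  assumes adm: "admissible_div d \<alpha>" and A: "A \<in> pdists" "\<forall>x. 0 < A x"
  shows "0 < \<alpha>" "locally_ge_chi_square d A \<alpha>" "locally_le_chi_square d A \<alpha>"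
proof -
  have "0 < \<alpha> \<and> locally_ge_chi_square d A \<alpha> \<and> locally_le_chi_square d A \<alpha>"
    using adm unfolding admissible_div_def
  proof (elim disjE exE conjE)
    assume \<alpha>: "0 < \<alpha>" and d: "d = renyi_div \<alpha>"
    show ?thesis
    proof (cases "\<alpha> = 1")
      case True
      then have "d = KL" by (auto simp: d renyi_div_def fun_eq_iff)
      then show ?thesis using KL_locally_chi_square[OF A] True by simp
    next
      case False
      then show ?thesis
        using renyi_locally_ge_chi_square[OF A \<alpha> False] renyi_locally_le_chi_square[OF A \<alpha> False] \<alpha> d
        by simp
    qed
  next
    fix f f' f''
    assume "convex_on {0..} f" "f 1 = 0"
      and "\<forall>t>0. (f has_real_derivative f' t) (at t) \<and> (f' has_real_derivative f'' t) (at t)"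
      and \<alpha>: "\<alpha> = f'' 1" "0 < \<alpha>" and d: "d = f_div f"
    then interpret convex_generator f f' f'' by unfold_locales auto
    show ?thesis using f_div_locally_chi_square[OF A] \<alpha> d by simp
  qed
  then show "0 < \<alpha>" "locally_ge_chi_square d A \<alpha>" "locally_le_chi_square d A \<alpha>" by auto
qed

section \<open>Worst-case exponents over a divergence ball\<close>

lemma KL_ge_variational:
  assumes Q: "Q \<in> pdists" and P: "P \<in> pdists"
  shows "ereal ((\<Sum>x\<in>UNIV. Q x * g x) - (\<Sum>x\<in>UNIV. P x * exp (g x)) + 1) \<le> KL Q P"
proof (cases "\<exists>x. 0 < Q x \<and> P x = 0")
  case True
  then show ?thesis by (simp add: KL_def)
next
  case False
  have "Q x * g x - P x * exp (g x) + Q x \<le> (if Q x = 0 then 0 else Q x * ln (Q x / P x))" for x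
  proof (cases "Q x = 0")
    case True
    then show ?thesis using pdists_nonneg[OF P, of x] by simp
  next
    case Q0: False
    then have q: "0 < Q x" using pdists_nonneg[OF Q, of x] by simp
    then have p: "0 < P x" using False pdists_nonneg[OF P, of x] by force
    define y where "y = P x * exp (g x) / Q x"
    have y: "0 < y" using p q by (simp add: y_def)
    have "ln (Q x / P x) = g x - ln y"
      using p q by (simp add: y_def ln_div ln_mult)
    then have "Q x * ln (Q x / P x) = Q x * g x - Q x * ln y"
      by (simp add: right_diff_distrib)
    moreover have "Q x * ln y \<le> Q x * (y - 1)"
      using ln_le_minus_one[OF y] q by (simp add: mult_left_mono)
    moreover have "Q x * (y - 1) = P x * exp (g x) - Q x"
      using q by (simp add: y_def field_simps)
    ultimately show ?thesis using Q0 by simp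
  qed
  then have "(\<Sum>x\<in>UNIV. Q x * g x - P x * exp (g x) + Q x)
      \<le> (\<Sum>x\<in>UNIV. if Q x = 0 then 0 else Q x * ln (Q x / P x))"
    by (rule sum_mono)
  then show ?thesis
    using False by (simp add: KL_def sum.distrib sum_subtractf pdists_sum[OF Q])
qed

(* KL_ge_variational with g = ln(Qs/A) and the minimality of Qs over H reduce the claim to
   \<Sum> Qs P / A - 1 \<le> sqrt(\<chi>\<^sup>2(Qs||A) \<chi>\<^sup>2(P||A)), which is Cauchy-Schwarz. *)
lemma INF_KL_ball_ge:
  assumes A: "A \<in> pdists" "\<forall>x. 0 < A x" and Qs: "Qs \<in> pdists" "\<forall>x. 0 < Qs x"
    and H: "\<forall>Q\<in>H. Q \<in> pdists \<and> (\<Sum>x\<in>UNIV. Qs x * ln (Qs x / A x)) \<le> (\<Sum>x\<in>UNIV. Q x * ln (Qs x / A x))"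
    and c: "0 < c" and ball: "\<forall>P\<in>pdists. d A P \<le> ereal r \<longrightarrow> ereal (c * chi_square A P) \<le> d A P"
  shows "ereal ((\<Sum>x\<in>UNIV. Qs x * ln (Qs x / A x)) - sqrt (r * chi_square A Qs / c))
           \<le> (INF P\<in>div_ball d A r. INF Q\<in>H. KL Q P)"
proof (intro INF_greatest)
  fix P Q assume P: "P \<in> div_ball d A r" and Q: "Q \<in> H"
  have P_dist: "P \<in> pdists" and dP: "d A P \<le> ereal r"
    using P by (auto simp: div_ball_def)
  have "c * chi_square A P \<le> r"
    using ball P_dist dP by (metis ereal_less_eq(3) order_trans)
  moreover have "0 \<le> chi_square A Qs"
    using A(2) by (intro chi_square_nonneg) (simp add: less_imp_le)
  ultimately have "c * chi_square A P * chi_square A Qs \<le> r * chi_square A Qs"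
    by (rule mult_right_mono)
  then have "chi_square A Qs * chi_square A P \<le> r * chi_square A Qs / c"
    using c by (simp add: field_simps)
  then have "(\<Sum>x\<in>UNIV. Qs x * P x / A x) - 1 \<le> sqrt (r * chi_square A Qs / c)"
    using sum_ratio_le_sqrt_chi_square[OF A Qs(1) P_dist] by (meson order_trans real_sqrt_le_mono)
  moreover have "exp (ln (Qs x / A x)) = Qs x / A x" for x
    using A(2) Qs(2) by simp
  then have "ereal ((\<Sum>x\<in>UNIV. Q x * ln (Qs x / A x)) - (\<Sum>x\<in>UNIV. P x * (Qs x / A x)) + 1) \<le> KL Q P"
    using KL_ge_variational[of Q P "\<lambda>x. ln (Qs x / A x)"] H Q P_dist by simp
  moreover have "(\<Sum>x\<in>UNIV. Qs x * ln (Qs x / A x)) \<le> (\<Sum>x\<in>UNIV. Q x * ln (Qs x / A x))"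
    using H Q by blast
  moreover have "(\<Sum>x\<in>UNIV. P x * (Qs x / A x)) = (\<Sum>x\<in>UNIV. Qs x * P x / A x)"
    by (simp add: mult.commute)
  ultimately show "ereal ((\<Sum>x\<in>UNIV. Qs x * ln (Qs x / A x)) - sqrt (r * chi_square A Qs / c)) \<le> KL Q P"
    by (smt (verit) ereal_less_eq(3) order_trans)
qed

lemma ln_one_plus_ge: "\<bar>u::real\<bar> \<le> 1 / 2 \<Longrightarrow> u - 2 * u\<^sup>2 \<le> ln (1 + u)"
proof (cases "0 \<le> u")
  case True
  assume "\<bar>u\<bar> \<le> 1 / 2"
  then have "u - u\<^sup>2 \<le> ln (1 + u)" using True by (intro ln_one_plus_pos_lower_bound) auto
  then show ?thesis by (smt (verit) zero_le_power2)
next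
  case False
  assume "\<bar>u\<bar> \<le> 1 / 2"
  then have "- (- u) - 2 * (- u)\<^sup>2 \<le> ln (1 - (- u))"
    using False by (intro ln_one_minus_pos_lower_bound) auto
  then show ?thesis by simp
qed

lemma KL_perturbed_le:
  assumes Q: "\<forall>x. 0 \<le> Q x" and A: "\<forall>x. 0 < A x" and u: "\<forall>x. \<bar>u x\<bar> \<le> 1 / 2"
  shows "KL Q (\<lambda>x. A x * (1 + u x))
           \<le> ereal ((\<Sum>x\<in>UNIV. Q x * ln (Q x / A x)) - (\<Sum>x\<in>UNIV. Q x * u x) + 2 * (\<Sum>x\<in>UNIV. Q x * (u x)\<^sup>2))"
proof -
  have pos: "0 < 1 + u x" for x
    using u[rule_format, of x] by linarith
  have "Q x * ln (Q x / (A x * (1 + u x))) \<le> Q x * ln (Q x / A x) - Q x * u x + 2 * (Q x * (u x)\<^sup>2)" for x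
  proof (cases "Q x = 0")
    case False
    then have "ln (Q x / (A x * (1 + u x))) = ln (Q x / A x) - ln (1 + u x)"
      using Q A pos[of x] by (simp add: ln_div ln_mult less_le)
    then have "Q x * ln (Q x / (A x * (1 + u x))) = Q x * ln (Q x / A x) - Q x * ln (1 + u x)"
      by (simp add: right_diff_distrib)
    moreover have "Q x * (u x - 2 * (u x)\<^sup>2) \<le> Q x * ln (1 + u x)"
      by (rule mult_left_mono) (use ln_one_plus_ge u Q in auto)
    ultimately show ?thesis by (simp add: right_diff_distrib)
  qed simp
  then have "(\<Sum>x\<in>UNIV. Q x * ln (Q x / (A x * (1 + u x))))
      \<le> (\<Sum>x\<in>UNIV. Q x * ln (Q x / A x) - Q x * u x + 2 * (Q x * (u x)\<^sup>2))"
    by (rule sum_mono)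
  then show ?thesis
    using KL_eq_sum[of "\<lambda>x. A x * (1 + u x)" Q] A pos
    by (simp add: sum.distrib sum_subtractf sum_distrib_left)
qed

lemma perturbation_in_pdists:
  assumes A: "A \<in> pdists" "\<forall>x. 0 < A x" and u: "(\<Sum>x\<in>UNIV. A x * u x) = 0" "\<forall>x. \<bar>u x\<bar> < 1"
  shows "(\<lambda>x. A x * (1 + u x)) \<in> pdists"
proof -
  have pos: "0 < 1 + u x" for x
    using u(2)[rule_format, of x] by (simp add: abs_less_iff)
  have "0 \<le> A x * (1 + u x)" for x
    using A(2)[rule_format, of x] pos[of x] by simp
  moreover have "(\<Sum>x\<in>UNIV. A x * (1 + u x)) = 1"
    using u(1) pdists_sum[OF A(1)] by (simp add: distrib_left sum.distrib)
  ultimately show ?thesis by (simp add: pdists_def)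
qed

lemma perturbation_towards:
  assumes A: "A \<in> pdists" "\<forall>x. 0 < A x" and Q: "Q \<in> pdists"
    and small: "\<forall>x. \<bar>t * (Q x / A x - 1)\<bar> \<le> 1 / 2"
  defines "P \<equiv> \<lambda>x. A x * (1 + t * (Q x / A x - 1))"
  shows "P \<in> pdists" and "chi_square A P = t\<^sup>2 * chi_square A Q"
    and "KL Q P \<le> ereal ((\<Sum>x\<in>UNIV. Q x * ln (Q x / A x)) - t * chi_square A Q
                          + 2 * t\<^sup>2 * (\<Sum>x\<in>UNIV. Q x * (Q x / A x - 1)\<^sup>2))"
proof -
  have "(\<Sum>x\<in>UNIV. A x * (t * (Q x / A x - 1))) = 0"
    using sum_ratio_deviation(1)[OF A Q] by (simp add: sum_distrib_left[symmetric] mult.left_commute)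
  moreover have "\<bar>t * (Q x / A x - 1)\<bar> < 1" for x
    using spec[OF small, of x] by linarith
  ultimately show "P \<in> pdists"
    unfolding P_def by (intro perturbation_in_pdists[OF A]) auto
  have "P x / A x - 1 = t * (Q x / A x - 1)" for x
    using A(2)[rule_format, of x] by (simp add: P_def)
  then show "chi_square A P = t\<^sup>2 * chi_square A Q"
    by (simp add: chi_square_def power_mult_distrib sum_distrib_left mult.left_commute)
  have "KL Q P \<le> ereal ((\<Sum>x\<in>UNIV. Q x * ln (Q x / A x)) - (\<Sum>x\<in>UNIV. Q x * (t * (Q x / A x - 1)))
                        + 2 * (\<Sum>x\<in>UNIV. Q x * (t * (Q x / A x - 1))\<^sup>2))"
    unfolding P_def using pdists_nonneg[OF Q] A(2) small by (intro KL_perturbed_le) auto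
  also have "(\<Sum>x\<in>UNIV. Q x * (t * (Q x / A x - 1))) = t * chi_square A Q"
    using sum_ratio_deviation(2)[OF A Q] by (simp add: sum_distrib_left[symmetric] mult.left_commute)
  also have "(\<Sum>x\<in>UNIV. Q x * (t * (Q x / A x - 1))\<^sup>2) = t\<^sup>2 * (\<Sum>x\<in>UNIV. Q x * (Q x / A x - 1)\<^sup>2)"
    by (simp add: power_mult_distrib sum_distrib_left mult.left_commute)
  finally show "KL Q P \<le> ereal ((\<Sum>x\<in>UNIV. Q x * ln (Q x / A x)) - t * chi_square A Q
                          + 2 * t\<^sup>2 * (\<Sum>x\<in>UNIV. Q x * (Q x / A x - 1)\<^sup>2))"
    by (simp add: mult.assoc)
qed

(* The competitor is A pushed towards Qs by the step t for which c \<chi>\<^sup>2(P||A) = r; when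
   \<chi>\<^sup>2(Qs||A) = 0 the convention x / 0 = 0 makes t = 0 and P = A. *)
lemma INF_KL_ball_le:
  assumes A: "A \<in> pdists" "\<forall>x. 0 < A x" and Qs: "Qs \<in> pdists" "Qs \<in> H"
    and c: "0 < c" and r: "0 \<le> r" and \<rho>: "\<rho> \<le> 1 / 2"
    and ball: "\<forall>P\<in>pdists. (\<forall>x. \<bar>P x / A x - 1\<bar> \<le> \<rho>) \<longrightarrow> d A P \<le> ereal (c * chi_square A P)"
    and small: "\<forall>x. sqrt (r / (c * chi_square A Qs)) * \<bar>Qs x / A x - 1\<bar> \<le> \<rho>"
  shows "(INF P\<in>div_ball d A r. INF Q\<in>H. KL Q P)
           \<le> ereal ((\<Sum>x\<in>UNIV. Qs x * ln (Qs x / A x)) - sqrt (r * chi_square A Qs / c)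
                     + r * (2 * (\<Sum>x\<in>UNIV. Qs x * (Qs x / A x - 1)\<^sup>2) / (c * chi_square A Qs)))"
proof -
  define V where "V = chi_square A Qs"
  define t where "t = sqrt (r / (c * V))"
  define P where "P = (\<lambda>x. A x * (1 + t * (Qs x / A x - 1)))"
  have V: "0 \<le> V"
    unfolding V_def using A(2) by (intro chi_square_nonneg) (simp add: less_imp_le)
  have t: "t\<^sup>2 = r / (c * V)" "t * V = sqrt (r * V / c)"
  proof -
    show "t\<^sup>2 = r / (c * V)" using r c V by (simp add: t_def)
    have "t * V = sqrt (r / (c * V)) * sqrt (V\<^sup>2)"
      using V by (simp add: t_def)
    also have "\<dots> = sqrt (r / (c * V) * V\<^sup>2)"
      by (rule real_sqrt_mult[symmetric])
    also have "r / (c * V) * V\<^sup>2 = r * V / c"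
      by (cases "V = 0") (simp_all add: power2_eq_square)
    finally show "t * V = sqrt (r * V / c)" .
  qed
  have "0 \<le> t"
    using r c V by (simp add: t_def)
  then have step: "\<forall>x. \<bar>t * (Qs x / A x - 1)\<bar> \<le> \<rho>"
    using small by (simp add: abs_mult t_def[symmetric] V_def[symmetric])
  then have "\<forall>x. \<bar>t * (Qs x / A x - 1)\<bar> \<le> 1 / 2"
    using \<rho> by (meson order_trans)
  note P = perturbation_towards[OF A Qs(1) this, folded P_def]
  have "P x / A x - 1 = t * (Qs x / A x - 1)" for x
    using A(2)[rule_format, of x] by (simp add: P_def)
  then have "d A P \<le> ereal (c * chi_square A P)"
    using ball P(1) step by simp
  also have "chi_square A P = t\<^sup>2 * V"
    using P(2) by (simp add: V_def)
  also have "c * (t\<^sup>2 * V) \<le> r"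
    using t(1) c r V by (cases "V = 0") (auto simp: field_simps)
  finally have "P \<in> div_ball d A r"
    using P(1) by (simp add: div_ball_def)
  then have "(INF P\<in>div_ball d A r. INF Q\<in>H. KL Q P) \<le> KL Qs P"
    using Qs(2) by (meson INF_lower2 INF_lower)
  also have "\<dots> \<le> ereal ((\<Sum>x\<in>UNIV. Qs x * ln (Qs x / A x)) - t * V
                          + 2 * t\<^sup>2 * (\<Sum>x\<in>UNIV. Qs x * (Qs x / A x - 1)\<^sup>2))"
    using P(3) by (simp add: V_def)
  finally show ?thesis
    using t by (simp add: V_def mult_ac)
qed

lemma sqrt_scaled_close_below:
  assumes \<alpha>: "0 < \<alpha>" and \<epsilon>: "0 < \<epsilon>"
  shows "\<exists>c. 0 < c \<and> c < \<alpha> / 2 \<and> (\<forall>r\<ge>0. sqrt (r * V / c) \<le> sqrt (r * (2 / \<alpha> * V)) + \<epsilon> * sqrt r)"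
proof -
  have eq: "V / (\<alpha> / 2) = 2 / \<alpha> * V" by simp
  have "((\<lambda>c. sqrt (V / c)) \<longlongrightarrow> sqrt (V / (\<alpha> / 2))) (at_left (\<alpha> / 2))"
    using \<alpha> by (intro tendsto_intros) auto
  then have "\<forall>\<^sub>F c in at_left (\<alpha> / 2). sqrt (V / c) < sqrt (2 / \<alpha> * V) + \<epsilon>"
    using \<epsilon> unfolding eq by (intro order_tendstoD(2)) auto
  moreover have "\<forall>\<^sub>F c in at_left (\<alpha> / 2). c \<in> {0<..<\<alpha> / 2}"
    using \<alpha> by (intro eventually_at_left_real) simp
  ultimately have "\<exists>c. sqrt (V / c) < sqrt (2 / \<alpha> * V) + \<epsilon> \<and> c \<in> {0<..<\<alpha> / 2}"
    by (intro eventually_happens'[OF trivial_limit_at_left_real] eventually_conj)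
  then obtain c where c: "0 < c" "c < \<alpha> / 2" and close: "sqrt (V / c) < sqrt (2 / \<alpha> * V) + \<epsilon>"
    by auto
  have "sqrt (r * V / c) \<le> sqrt (r * (2 / \<alpha> * V)) + \<epsilon> * sqrt r" if "0 \<le> r" for r
  proof -
    have "sqrt (r * V / c) = sqrt r * sqrt (V / c)"
      by (simp add: real_sqrt_mult[symmetric])
    also have "\<dots> \<le> sqrt r * (sqrt (2 / \<alpha> * V) + \<epsilon>)"
      using close that by (intro mult_left_mono) auto
    finally show ?thesis
      unfolding real_sqrt_mult by (simp add: algebra_simps)
  qed
  then show ?thesis using c by blast
qed

lemma sqrt_scaled_close_above:
  assumes \<alpha>: "0 < \<alpha>" and \<epsilon>: "0 < \<epsilon>"
  shows "\<exists>c. \<alpha> / 2 < c \<and> (\<forall>r\<ge>0. sqrt (r * (2 / \<alpha> * V)) - \<epsilon> * sqrt r \<le> sqrt (r * V / c))"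
proof -
  have eq: "V / (\<alpha> / 2) = 2 / \<alpha> * V" by simp
  have "((\<lambda>c. sqrt (V / c)) \<longlongrightarrow> sqrt (V / (\<alpha> / 2))) (at_right (\<alpha> / 2))"
    using \<alpha> by (intro tendsto_intros) auto
  then have "\<forall>\<^sub>F c in at_right (\<alpha> / 2). sqrt (2 / \<alpha> * V) - \<epsilon> < sqrt (V / c)"
    using \<epsilon> unfolding eq by (intro order_tendstoD(1)) auto
  moreover have "\<forall>\<^sub>F c in at_right (\<alpha> / 2). \<alpha> / 2 < c"
    by (rule eventually_at_right_less)
  ultimately have "\<exists>c. sqrt (2 / \<alpha> * V) - \<epsilon> < sqrt (V / c) \<and> \<alpha> / 2 < c"
    by (intro eventually_happens'[OF trivial_limit_at_right_real] eventually_conj)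
  then obtain c where c: "\<alpha> / 2 < c" and close: "sqrt (2 / \<alpha> * V) - \<epsilon> < sqrt (V / c)"
    by auto
  have "sqrt (r * (2 / \<alpha> * V)) - \<epsilon> * sqrt r \<le> sqrt (r * V / c)" if "0 \<le> r" for r
  proof -
    have "sqrt (r * (2 / \<alpha> * V)) - \<epsilon> * sqrt r = sqrt r * (sqrt (2 / \<alpha> * V) - \<epsilon>)"
      unfolding real_sqrt_mult by (simp add: algebra_simps)
    also have "\<dots> \<le> sqrt r * sqrt (V / c)"
      using close that by (intro mult_left_mono) auto
    finally show ?thesis
      by (simp add: real_sqrt_mult[symmetric])
  qed
  then show ?thesis using c by blast
qed

lemma eventually_le_sqrt: "0 < \<epsilon> \<Longrightarrow> \<forall>\<^sub>F r in at_right 0. r * K \<le> \<epsilon> * sqrt r"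
proof -
  assume \<epsilon>: "0 < \<epsilon>"
  have "((\<lambda>r. sqrt r * K) \<longlongrightarrow> sqrt 0 * K) (at_right 0)"
    by (intro tendsto_intros)
  then have "\<forall>\<^sub>F r in at_right 0. sqrt r * K < \<epsilon>"
    using \<epsilon> by (intro order_tendstoD(2)) auto
  then show ?thesis
    using eventually_at_right_less[of 0]
  proof eventually_elim
    case (elim r)
    then have "r * K = sqrt r * (sqrt r * K)"
      by (simp add: mult.assoc[symmetric])
    also have "\<dots> \<le> sqrt r * \<epsilon>"
      using elim by (intro mult_left_mono) auto
    finally show ?case by (simp add: mult.commute)
  qed
qed

lemma eventually_sqrt_scaled_le:
  fixes h :: "'a::finite \<Rightarrow> real"
  assumes "0 < \<rho>"
  shows "\<forall>\<^sub>F r in at_right 0. \<forall>x. sqrt (r / K) * \<bar>h x\<bar> \<le> \<rho>"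
proof (rule eventually_all_finite)
  fix x
  have "((\<lambda>r. sqrt (r * inverse K) * \<bar>h x\<bar>) \<longlongrightarrow> sqrt (0 * inverse K) * \<bar>h x\<bar>) (at_right 0)"
    by (intro tendsto_intros)
  then have "\<forall>\<^sub>F r in at_right 0. sqrt (r / K) * \<bar>h x\<bar> < \<rho>"
    using assms unfolding divide_inverse by (intro order_tendstoD(2)) auto
  then show "\<forall>\<^sub>F r in at_right 0. sqrt (r / K) * \<bar>h x\<bar> \<le> \<rho>"
    by eventually_elim simp
qed

lemma eventually_INF_KL_ball_ge:
  assumes A: "A \<in> pdists" "\<forall>x. 0 < A x" and Qs: "Qs \<in> pdists" "\<forall>x. 0 < Qs x"
    and H: "\<forall>Q\<in>H. Q \<in> pdists \<and> (\<Sum>x\<in>UNIV. Qs x * ln (Qs x / A x)) \<le> (\<Sum>x\<in>UNIV. Q x * ln (Qs x / A x))"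
    and \<alpha>: "0 < \<alpha>" and lower: "locally_ge_chi_square d A \<alpha>" and \<epsilon>: "0 < \<epsilon>"
  shows "\<forall>\<^sub>F r in at_right 0.
           ereal ((\<Sum>x\<in>UNIV. Qs x * ln (Qs x / A x)) - sqrt (r * (2 / \<alpha> * chi_square A Qs)) - \<epsilon> * sqrt r)
             \<le> (INF P\<in>div_ball d A r. INF Q\<in>H. KL Q P)"
proof -
  obtain c where c: "0 < c" "c < \<alpha> / 2"
    and close: "\<forall>r\<ge>0. sqrt (r * chi_square A Qs / c) \<le> sqrt (r * (2 / \<alpha> * chi_square A Qs)) + \<epsilon> * sqrt r"
    using sqrt_scaled_close_below[OF \<alpha> \<epsilon>] by blast
  obtain \<kappa> where \<kappa>: "0 < \<kappa>"
    and ge: "\<forall>P\<in>pdists. d A P \<le> ereal \<kappa> \<longrightarrow> ereal (c * chi_square A P) \<le> d A P"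
    using lower c unfolding locally_ge_chi_square_def by blast
  show ?thesis
    using eventually_at_right_real[OF \<kappa>]
  proof eventually_elim
    case (elim r)
    then have "\<forall>P\<in>pdists. d A P \<le> ereal r \<longrightarrow> ereal (c * chi_square A P) \<le> d A P"
      using ge by (meson ereal_less_eq(3) greaterThanLessThan_iff less_imp_le order_trans)
    then have bound: "ereal ((\<Sum>x\<in>UNIV. Qs x * ln (Qs x / A x)) - sqrt (r * chi_square A Qs / c))
                 \<le> (INF P\<in>div_ball d A r. INF Q\<in>H. KL Q P)"
      by (rule INF_KL_ball_ge[where d = d, OF A Qs H c(1)])
    have "ereal ((\<Sum>x\<in>UNIV. Qs x * ln (Qs x / A x)) - sqrt (r * (2 / \<alpha> * chi_square A Qs)) - \<epsilon> * sqrt r)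
            \<le> ereal ((\<Sum>x\<in>UNIV. Qs x * ln (Qs x / A x)) - sqrt (r * chi_square A Qs / c))"
      using close[rule_format, of r] elim by simp
    then show ?case using bound by (rule order_trans)
  qed
qed

lemma eventually_INF_KL_ball_le:
  assumes A: "A \<in> pdists" "\<forall>x. 0 < A x" and Qs: "Qs \<in> pdists" "Qs \<in> H"
    and \<alpha>: "0 < \<alpha>" and upper: "locally_le_chi_square d A \<alpha>" and \<epsilon>: "0 < \<epsilon>"
  shows "\<forall>\<^sub>F r in at_right 0.
           (INF P\<in>div_ball d A r. INF Q\<in>H. KL Q P)
             \<le> ereal ((\<Sum>x\<in>UNIV. Qs x * ln (Qs x / A x)) - sqrt (r * (2 / \<alpha> * chi_square A Qs)) + \<epsilon> * sqrt r)"
proof -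
  define V where "V = chi_square A Qs"
  define N where "N = (\<Sum>x\<in>UNIV. Qs x * (Qs x / A x - 1)\<^sup>2)"
  obtain c where c: "\<alpha> / 2 < c"
    and close: "\<forall>r\<ge>0. sqrt (r * (2 / \<alpha> * V)) - \<epsilon> / 2 * sqrt r \<le> sqrt (r * V / c)"
    using sqrt_scaled_close_above[OF \<alpha>, of "\<epsilon> / 2"] \<epsilon> by auto
  have c_pos: "0 < c" using c \<alpha> by linarith
  obtain \<rho>0 where \<rho>0: "0 < \<rho>0"
    and le: "\<forall>P\<in>pdists. (\<forall>x. \<bar>P x / A x - 1\<bar> \<le> \<rho>0) \<longrightarrow> d A P \<le> ereal (c * chi_square A P)"
    using upper c unfolding locally_le_chi_square_def by blast
  define \<rho> where "\<rho> = min \<rho>0 (1 / 2)"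
  have \<rho>: "0 < \<rho>" "\<rho> \<le> 1 / 2"
    using \<rho>0 by (auto simp: \<rho>_def)
  have ball: "\<forall>P\<in>pdists. (\<forall>x. \<bar>P x / A x - 1\<bar> \<le> \<rho>) \<longrightarrow> d A P \<le> ereal (c * chi_square A P)"
    using le by (auto simp: \<rho>_def)
  show ?thesis
    using eventually_at_right_less[of 0] eventually_sqrt_scaled_le[OF \<rho>(1), of "c * V" "\<lambda>x. Qs x / A x - 1"]
      eventually_le_sqrt[OF half_gt_zero[OF \<epsilon>], of "2 * N / (c * V)"]
  proof eventually_elim
    case (elim r)
    have "(INF P\<in>div_ball d A r. INF Q\<in>H. KL Q P)
            \<le> ereal ((\<Sum>x\<in>UNIV. Qs x * ln (Qs x / A x)) - sqrt (r * V / c) + r * (2 * N / (c * V)))"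
      using elim unfolding V_def N_def
      by (intro INF_KL_ball_le[where d = d, OF A Qs c_pos _ \<rho>(2) ball]) auto
    also have "\<dots> \<le> ereal ((\<Sum>x\<in>UNIV. Qs x * ln (Qs x / A x)) - sqrt (r * (2 / \<alpha> * V)) + \<epsilon> * sqrt r)"
      using close[rule_format, of r] elim(1,3) by simp
    finally show ?case unfolding V_def .
  qed
qed

lemma abs_ereal_diff_le:
  assumes "ereal (m - e) \<le> W" "W \<le> ereal (m + e)"
  shows "\<bar>W - ereal m\<bar> \<le> ereal e"
  using assms by (cases W) auto

lemma INF_KL_ball_expansion:
  assumes A: "A \<in> pdists" "\<forall>x. 0 < A x" and Qs: "Qs \<in> pdists" "\<forall>x. 0 < Qs x" "Qs \<in> H"
    and H: "\<forall>Q\<in>H. Q \<in> pdists \<and> (\<Sum>x\<in>UNIV. Qs x * ln (Qs x / A x)) \<le> (\<Sum>x\<in>UNIV. Q x * ln (Qs x / A x))"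
    and \<alpha>: "0 < \<alpha>" and lower: "locally_ge_chi_square d A \<alpha>" and upper: "locally_le_chi_square d A \<alpha>"
  shows "\<forall>\<epsilon>>0. \<forall>\<^sub>F r in at_right 0.
           \<bar>(INF P\<in>div_ball d A r. INF Q\<in>H. KL Q P)
              - ereal (real_of_ereal (KL Qs A) - sqrt (r * (2 / \<alpha> * variance_under A (\<lambda>x. Qs x / A x))))\<bar>
             \<le> ereal (\<epsilon> * sqrt r)"
proof (intro allI impI)
  fix \<epsilon> :: real assume \<epsilon>: "0 < \<epsilon>"
  have E: "real_of_ereal (KL Qs A) = (\<Sum>x\<in>UNIV. Qs x * ln (Qs x / A x))"
    using KL_eq_sum[OF A(2)] by simp
  have var: "variance_under A (\<lambda>x. Qs x / A x) = chi_square A Qs"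
    by (rule variance_ratio_eq_chi_square[OF A Qs(1)])
  show "\<forall>\<^sub>F r in at_right 0.
           \<bar>(INF P\<in>div_ball d A r. INF Q\<in>H. KL Q P)
              - ereal (real_of_ereal (KL Qs A) - sqrt (r * (2 / \<alpha> * variance_under A (\<lambda>x. Qs x / A x))))\<bar>
             \<le> ereal (\<epsilon> * sqrt r)"
    using eventually_INF_KL_ball_ge[OF A Qs(1,2) H \<alpha> lower \<epsilon>] eventually_INF_KL_ball_le[OF A Qs(1,3) \<alpha> upper \<epsilon>]
    unfolding E var by eventually_elim (auto intro: abs_ereal_diff_le)
qed

section \<open>Exponential tilting\<close>

lemma tilt_normaliser_pos:
  fixes A B :: "'a::finite \<Rightarrow> real"
  assumes "\<forall>x. 0 < A x" "\<forall>x. 0 < B x"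
  shows "0 < (\<Sum>a\<in>UNIV. A a powr (1 - \<mu>) * B a powr \<mu>)"
proof -
  have "0 < A a powr (1 - \<mu>) * B a powr \<mu>" for a
    using assms(1)[rule_format, of a] assms(2)[rule_format, of a] by simp
  then show ?thesis by (intro sum_pos) auto
qed

lemma tilt_pos:
  fixes A B :: "'a::finite \<Rightarrow> real"
  assumes "\<forall>x. 0 < A x" "\<forall>x. 0 < B x"
  shows "0 < tilt A B \<mu> x"
  using tilt_normaliser_pos[OF assms] assms(1)[rule_format, of x] assms(2)[rule_format, of x]
  unfolding tilt_def by (intro divide_pos_pos) auto

lemma tilt_in_pdists:
  fixes A B :: "'a::finite \<Rightarrow> real"
  assumes "\<forall>x. 0 < A x" "\<forall>x. 0 < B x"
  shows "tilt A B \<mu> \<in> pdists"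
proof -
  have "(\<Sum>x\<in>UNIV. tilt A B \<mu> x) = 1"
    using tilt_normaliser_pos[OF assms, of \<mu>] unfolding tilt_def by (simp add: sum_divide_distrib[symmetric])
  then show ?thesis using tilt_pos[OF assms] by (auto simp: pdists_def less_imp_le)
qed

lemma tilt_swap: "tilt A B \<mu> = tilt B A (1 - \<mu>)"
  unfolding tilt_def by (simp add: mult.commute)

lemma ln_tilt_ratio:
  assumes A: "\<forall>x. 0 < A x" and B: "\<forall>x. 0 < B x"
  shows "ln (tilt A B \<mu> x / A x) = \<mu> * ln (B x / A x) - ln (\<Sum>a\<in>UNIV. A a powr (1 - \<mu>) * B a powr \<mu>)"
proof -
  define Z where "Z = (\<Sum>a\<in>UNIV. A a powr (1 - \<mu>) * B a powr \<mu>)"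
  have Z: "0 < Z" unfolding Z_def by (rule tilt_normaliser_pos[OF A B])
  have a: "0 < A x" "0 < B x" using A B by auto
  have "tilt A B \<mu> x / A x = A x powr (1 - \<mu>) * B x powr \<mu> / (Z * A x)"
    unfolding tilt_def Z_def by simp
  then have "ln (tilt A B \<mu> x / A x) = (1 - \<mu>) * ln (A x) + \<mu> * ln (B x) - (ln Z + ln (A x))"
    using a Z by (simp add: ln_div ln_mult ln_powr)
  then show ?thesis using a by (simp add: Z_def ln_div algebra_simps)
qed

lemma tilt_minimises_cross_entropy:
  assumes A: "\<forall>x. 0 < A x" and B: "\<forall>x. 0 < B x" and \<mu>: "0 \<le> \<mu>" and Q: "Q \<in> pdists"
    and le: "(\<Sum>x\<in>UNIV. tilt A B \<mu> x * ln (B x / A x)) \<le> (\<Sum>x\<in>UNIV. Q x * ln (B x / A x))"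
  shows "(\<Sum>x\<in>UNIV. tilt A B \<mu> x * ln (tilt A B \<mu> x / A x)) \<le> (\<Sum>x\<in>UNIV. Q x * ln (tilt A B \<mu> x / A x))"
proof -
  define Z where "Z = (\<Sum>a\<in>UNIV. A a powr (1 - \<mu>) * B a powr \<mu>)"
  have cross: "(\<Sum>x\<in>UNIV. R x * ln (tilt A B \<mu> x / A x)) = \<mu> * (\<Sum>x\<in>UNIV. R x * ln (B x / A x)) - ln Z"
    if "R \<in> pdists" for R
    by (simp add: ln_tilt_ratio[OF A B] Z_def[symmetric] right_diff_distrib sum_subtractf
        sum_distrib_left[symmetric] sum_distrib_right[symmetric] pdists_sum[OF that] mult.left_commute)
  show ?thesis
    using mult_left_mono[OF le \<mu>] by (simp add: cross Q tilt_in_pdists[OF A B])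
qed

lemma KL_diff:
  assumes Q: "Q \<in> pdists" and A: "\<forall>x. 0 < A x" and B: "\<forall>x. 0 < B x"
  shows "KL Q A - KL Q B = ereal (\<Sum>x\<in>UNIV. Q x * ln (B x / A x))"
proof -
  have "Q x * ln (Q x / A x) - Q x * ln (Q x / B x) = Q x * ln (B x / A x)" for x
  proof (cases "Q x = 0")
    case False
    then have "0 < Q x" using pdists_nonneg[OF Q, of x] by simp
    then show ?thesis
      using A[rule_format, of x] B[rule_format, of x] by (simp add: ln_div algebra_simps)
  qed simp
  then show ?thesis unfolding KL_eq_sum[OF A] KL_eq_sum[OF B] by (simp add: sum_subtractf[symmetric])
qed

lemma sum_ln_ratio_swap:
  fixes A B :: "'a::finite \<Rightarrow> real"
  assumes "\<forall>x. 0 < A x" "\<forall>x. 0 < B x"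
  shows "(\<Sum>x\<in>UNIV. Q x * ln (A x / B x)) = - (\<Sum>x\<in>UNIV. Q x * ln (B x / A x))"
proof -
  have "Q x * ln (A x / B x) = - (Q x * ln (B x / A x))" for x
    using assms(1)[rule_format, of x] assms(2)[rule_format, of x] by (simp add: ln_div algebra_simps)
  then show ?thesis by (simp add: sum_negf[symmetric])
qed

lemma tilt_minimises_on_Qhat0:
  assumes P0: "\<forall>x. 0 < P0 x" and P1: "\<forall>x. 0 < P1 x" and lam: "0 \<le> lam"
    and \<gamma>: "(\<Sum>x\<in>UNIV. tilt P0 P1 lam x * ln (P1 x / P0 x)) = \<gamma>"
  shows "\<forall>Q\<in>Qhat0 P0 P1 \<gamma>. Q \<in> pdists \<and>
           (\<Sum>x\<in>UNIV. tilt P0 P1 lam x * ln (tilt P0 P1 lam x / P0 x))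
             \<le> (\<Sum>x\<in>UNIV. Q x * ln (tilt P0 P1 lam x / P0 x))"
proof
  fix Q assume "Q \<in> Qhat0 P0 P1 \<gamma>"
  then have Q: "Q \<in> pdists" and "ereal \<gamma> \<le> KL Q P0 - KL Q P1"
    by (auto simp: Qhat0_def)
  then have "\<gamma> \<le> (\<Sum>x\<in>UNIV. Q x * ln (P1 x / P0 x))"
    using KL_diff[OF Q P0 P1] by simp
  then show "Q \<in> pdists \<and> (\<Sum>x\<in>UNIV. tilt P0 P1 lam x * ln (tilt P0 P1 lam x / P0 x))
               \<le> (\<Sum>x\<in>UNIV. Q x * ln (tilt P0 P1 lam x / P0 x))"
    using tilt_minimises_cross_entropy[OF P0 P1 lam Q] \<gamma> Q by simp
qed

lemma tilt_minimises_on_Qhat1: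
  assumes P0: "\<forall>x. 0 < P0 x" and P1: "\<forall>x. 0 < P1 x" and lam: "lam \<le> 1"
    and \<gamma>: "(\<Sum>x\<in>UNIV. tilt P0 P1 lam x * ln (P1 x / P0 x)) = \<gamma>"
  shows "\<forall>Q\<in>Qhat1 P0 P1 \<gamma>. Q \<in> pdists \<and>
           (\<Sum>x\<in>UNIV. tilt P0 P1 lam x * ln (tilt P0 P1 lam x / P1 x))
             \<le> (\<Sum>x\<in>UNIV. Q x * ln (tilt P0 P1 lam x / P1 x))"
proof
  fix Q assume "Q \<in> Qhat1 P0 P1 \<gamma>"
  then have Q: "Q \<in> pdists" and "KL Q P0 - KL Q P1 \<le> ereal \<gamma>"
    by (auto simp: Qhat1_def)
  then have "(\<Sum>x\<in>UNIV. Q x * ln (P1 x / P0 x)) \<le> \<gamma>"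
    using KL_diff[OF Q P0 P1] by simp
  then have "(\<Sum>x\<in>UNIV. tilt P1 P0 (1 - lam) x * ln (P0 x / P1 x)) \<le> (\<Sum>x\<in>UNIV. Q x * ln (P0 x / P1 x))"
    using \<gamma> sum_ln_ratio_swap[OF P0 P1] by (simp add: tilt_swap[of P0])
  then show "Q \<in> pdists \<and> (\<Sum>x\<in>UNIV. tilt P0 P1 lam x * ln (tilt P0 P1 lam x / P1 x))
               \<le> (\<Sum>x\<in>UNIV. Q x * ln (tilt P0 P1 lam x / P1 x))"
    using tilt_minimises_cross_entropy[OF P1 P0 _ Q] lam Q by (simp add: tilt_swap[of P0])
qed

theorem theorem3:
  fixes P0h P1h :: "'a::finite \<Rightarrow> real"
    and d :: "('a \<Rightarrow> real) \<Rightarrow> ('a \<Rightarrow> real) \<Rightarrow> ereal"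
    and \<alpha> \<gamma> lam :: real
  assumes adm: "admissible_div d \<alpha>"
    and P0h: "P0h \<in> pdists" "\<forall>x. 0 < P0h x"
    and P1h: "P1h \<in> pdists" "\<forall>x. 0 < P1h x"
    and thr: "- KL P0h P1h \<le> ereal \<gamma>" "ereal \<gamma> \<le> KL P1h P0h"
    and lam: "0 \<le> lam" "lam \<le> 1"
      "KL (tilt P0h P1h lam) P0h - KL (tilt P0h P1h lam) P1h = ereal \<gamma>"
  shows
    "\<forall>\<epsilon>>0. eventually (\<lambda>r.
        \<bar>worst_exp0 d P0h P1h \<gamma> r
          - ereal (real_of_ereal (KL (tilt P0h P1h lam) P0h)
                   - sqrt (r * (2 / \<alpha> * variance_under P0h (\<lambda>x. tilt P0h P1h lam x / P0h x))))\<bar>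
        \<le> ereal (\<epsilon> * sqrt r)) (at_right 0)
     \<and> (\<forall>\<epsilon>>0. eventually (\<lambda>r.
        \<bar>worst_exp1 d P0h P1h \<gamma> r
          - ereal (real_of_ereal (KL (tilt P0h P1h lam) P1h)
                   - sqrt (r * (2 / \<alpha> * variance_under P1h (\<lambda>x. tilt P0h P1h lam x / P1h x))))\<bar>
        \<le> ereal (\<epsilon> * sqrt r)) (at_right 0))"
proof -
  \<comment> \<open>thr only guarantees that a lam as in lam exists\<close>
  let ?Qs = "tilt P0h P1h lam"
  have Qs: "?Qs \<in> pdists" "\<forall>x. 0 < ?Qs x"
    using tilt_in_pdists tilt_pos P0h(2) P1h(2) by blast+
  have \<gamma>: "(\<Sum>x\<in>UNIV. ?Qs x * ln (P1h x / P0h x)) = \<gamma>"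
    using lam(3) KL_diff[OF Qs(1) P0h(2) P1h(2)] by simp
  have in_Qhat: "?Qs \<in> Qhat0 P0h P1h \<gamma>" "?Qs \<in> Qhat1 P0h P1h \<gamma>"
    using Qs(1) lam(3) by (simp_all add: Qhat0_def Qhat1_def)
  show ?thesis
    unfolding worst_exp0_def worst_exp1_def
    using INF_KL_ball_expansion[OF P0h Qs in_Qhat(1) tilt_minimises_on_Qhat0[OF P0h(2) P1h(2) lam(1) \<gamma>]
            admissible_div_locally_chi_square[OF adm P0h]]
      INF_KL_ball_expansion[OF P1h Qs in_Qhat(2) tilt_minimises_on_Qhat1[OF P0h(2) P1h(2) lam(2) \<gamma>]
            admissible_div_locally_chi_square[OF adm P1h]]
    by blast
qed

end
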